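(* Under the hypotheses of the setting below (restriction $r=(\sigma^{\mathrm{ASY}}+\delta)\mathbf 1$ with $\delta>0$, Assumptions A, B, C), let $\epsilon_i>0$, $i=1,\dots,N$, be arbitrary. Then there exists a finite time $T_\delta>0$ such that for all $t\ge T_\delta$, $$\sum_{i=1}^Nc_i^\top x_i^t-J^{\mathrm{MILP}}\le\sum_{i=1}^N\big(c_i^\top x_i^t-J_i^{\mathrm{LP},t}\big)+\sum_{i=1}^N\|\mu_i^t\|_1\epsilon_i+\Gamma(\sigma^{\mathrm{ASY}}+\delta),$$ where $\Gamma=\frac{1}{\zeta_{\hat z}}\sum_{i=1}^N\big(\max_{x_i\in X_i}c_i^\top x_i-\min_{x_i\in X_i}c_i^\top x_i\big)$, $J^{\mathrm{MILP}}$ is the optimal cost of the MILP, and $J_i^{\mathrm{LP},t}=c_i^\top z_i^t+Mv_i^t$ is the optimal cost of (P1) at time $t$.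
   Context: Data: for each $i\in\{1,\dots,N\}$, $c_i\in\mathbb{R}^{n_i}$, $A_i\in\mathbb{R}^{S\times n_i}$ (rows $A_i^s$), nonempty compact $X_i=\{x_i\in\mathbb{Z}^{Z_i}\times\mathbb{R}^{R_i}:D_ix_i\preceq d_i\}$; $b\in\mathbb{R}^S$ with components $b_s$. $\preceq$ is componentwise, $\mathbf 1$ the all-ones vector. MILP: minimize $\sum_ic_i^\top x_i$ s.t. $\sum_iA_ix_i\preceq b$, $x_i\in X_i$ (assumed feasible). Restricted LP (LP$_r$): minimize $\sum_ic_i^\top z_i$ s.t. $\sum_iA_iz_i\preceq b-r$, $z_i\in\mathrm{conv}(X_i)$. Restriction: $L_i^s=\min_{x_i\in X_i}A_i^sx_i$; $(x_i^L,\tilde\ell_i)$ optimal for minimize $\ell_i$ over $x_i\in X_i,\ell_i\in\mathbb{R}$ s.t. $A_ix_i-L_i\preceq\ell_i\mathbf 1$; $\sigma^{\mathrm{ASY}}=(S+1)\max_i\max_s(A_i^sx_i^L-L_i^s)$; here $r=(\sigma^{\mathrm{ASY}}+\delta)\mathbf 1$ for a fixed $\delta>0$. Assumption A: (LP$_r$) is feasible with unique optimal solution. Assumption B: step-sizes $\alpha^t\ge0$, $\sum_t\alpha^t=\infty$, $\sum_t(\alpha^t)^2<\infty$. Assumption C (Slater): there exist $\hat z_i\in\mathrm{conv}(X_i)$ with $\zeta_{\hat z}:=\min_s\big(b_s-r_s-\sum_iA_i^s\hat z_i\big)>0$. Algorithm over a connected undirected graph with neighbor sets $\mathcal N_i$,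 parameter $M>0$ sufficiently large, initialization $\sum_iy_i^0=b-r$. At each $t$, agent $i$: (P1) computes a primal-dual optimal pair $((z_i^t,v_i^t),\mu_i^t)$ of: minimize $c_i^\top z_i+Mv_i$ over $z_i\in\mathrm{conv}(X_i)$, $v_i\ge0$, s.t. $A_iz_i\preceq y_i^t+v_i\mathbf 1$ ($\mu_i^t$ the multiplier of this constraint); (P2) $y_i^{t+1}=y_i^t+\alpha^t\sum_{j\in\mathcal N_i}(\mu_i^t-\mu_j^t)$; (P3) computes $x_i^t$ via: minimize lexicographically $(\rho_i,\xi_i)$ over $x_i\in X_i,\rho_i\ge0,\xi_i$ s.t. $c_i^\top x_i\le\xi_i$, $A_ix_i\preceq y_i^t+\rho_i\mathbf 1$ (first minimize $\rho_i$, then $c_i^\top x_i$ with $\rho_i$ fixed at its minimum). *)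

theory Defs
  imports "HOL-Analysis.Analysis"
begin

text \<open>Vectors of R^n are represented as functions nat => real (only the first n
coordinates matter); a matrix with rows indexed by s is nat => nat => real
(row s, column k).\<close>

definition lin :: "nat \<Rightarrow> (nat \<Rightarrow> real) \<Rightarrow> (nat \<Rightarrow> real) \<Rightarrow> real" where
  "lin n a x = (\<Sum>k<n. a k * x k)"

definition Xset :: "nat \<Rightarrow> nat \<Rightarrow> (nat \<Rightarrow> nat \<Rightarrow> real) \<Rightarrow> (nat \<Rightarrow> real) \<Rightarrow> nat
     \<Rightarrow> (nat \<Rightarrow> real) set" where
  "Xset n Zc D d m = {x. (\<forall>k\<ge>n. x k = 0) \<and> (\<forall>k<Zc. x k \<in> \<int>)
                        \<and> (\<forall>q<m. lin n (D q) x \<le> d q)}"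

definition convh :: "(nat \<Rightarrow> real) set \<Rightarrow> (nat \<Rightarrow> real) set" where
  "convh P = {y. \<exists>(K::nat) p w. (\<forall>j<K. p j \<in> P \<and> w j \<ge> 0) \<and> (\<Sum>j<K. w j) = 1
                  \<and> y = (\<lambda>k. \<Sum>j<K. w j * p j k)}"

text \<open>Problem (P1) of one agent: minimize c'z + M v over z in conv X, v >= 0,
  s.t. A z <= y + v 1 (S rows).\<close>
definition P1_feas :: "nat \<Rightarrow> nat \<Rightarrow> (nat \<Rightarrow> nat \<Rightarrow> real) \<Rightarrow> (nat \<Rightarrow> real) set
     \<Rightarrow> (nat \<Rightarrow> real) \<Rightarrow> (nat \<Rightarrow> real) \<Rightarrow> real \<Rightarrow> bool" where
  "P1_feas n S A X y z v \<longleftrightarrow> z \<in> convh X \<and> v \<ge> 0 \<and> (\<forall>s<S. lin n (A s) z \<le> y s + v)"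

definition P1_lagr :: "nat \<Rightarrow> nat \<Rightarrow> (nat \<Rightarrow> real) \<Rightarrow> (nat \<Rightarrow> nat \<Rightarrow> real) \<Rightarrow> real
     \<Rightarrow> (nat \<Rightarrow> real) \<Rightarrow> (nat \<Rightarrow> real) \<Rightarrow> real \<Rightarrow> (nat \<Rightarrow> real) \<Rightarrow> real" where
  "P1_lagr n S c A M y z v \<mu> =
     lin n c z + M * v + (\<Sum>s<S. \<mu> s * (lin n (A s) z - y s - v))"

text \<open>Dual function (value in ereal, may be -infinity).\<close>
definition P1_dual :: "nat \<Rightarrow> nat \<Rightarrow> (nat \<Rightarrow> real) \<Rightarrow> (nat \<Rightarrow> nat \<Rightarrow> real) \<Rightarrow> real
     \<Rightarrow> (nat \<Rightarrow> real) set \<Rightarrow> (nat \<Rightarrow> real) \<Rightarrow> (nat \<Rightarrow> real) \<Rightarrow> ereal" where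
  "P1_dual n S c A M X y \<mu> =
     (INF zv \<in> convh X \<times> {0..}. ereal (P1_lagr n S c A M y (fst zv) (snd zv) \<mu>))"

definition P1_pd_opt :: "nat \<Rightarrow> nat \<Rightarrow> (nat \<Rightarrow> real) \<Rightarrow> (nat \<Rightarrow> nat \<Rightarrow> real) \<Rightarrow> real
     \<Rightarrow> (nat \<Rightarrow> real) set \<Rightarrow> (nat \<Rightarrow> real) \<Rightarrow> (nat \<Rightarrow> real) \<Rightarrow> real \<Rightarrow> (nat \<Rightarrow> real) \<Rightarrow> bool" where
  "P1_pd_opt n S c A M X y z v \<mu> \<longleftrightarrow>
     P1_feas n S A X y z v \<and>
     (\<forall>z' v'. P1_feas n S A X y z' v' \<longrightarrow> lin n c z + M * v \<le> lin n c z' + M * v') \<and>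
     (\<forall>s<S. \<mu> s \<ge> 0) \<and>
     (\<forall>\<mu>'. (\<forall>s<S. \<mu>' s \<ge> 0) \<longrightarrow> P1_dual n S c A M X y \<mu>' \<le> P1_dual n S c A M X y \<mu>)"

text \<open>Problem (P3): x is a lexicographic minimizer of (rho, c'x) over x in X, rho >= 0,
  A x <= y + rho 1.\<close>
definition P3_lexopt :: "nat \<Rightarrow> nat \<Rightarrow> (nat \<Rightarrow> real) \<Rightarrow> (nat \<Rightarrow> nat \<Rightarrow> real)
     \<Rightarrow> (nat \<Rightarrow> real) set \<Rightarrow> (nat \<Rightarrow> real) \<Rightarrow> (nat \<Rightarrow> real) \<Rightarrow> bool" where
  "P3_lexopt n S c A X y x \<longleftrightarrow> x \<in> X \<and>
     (\<exists>\<rho>\<ge>0. (\<forall>s<S. lin n (A s) x \<le> y s + \<rho>) \<and>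
        (\<forall>x'\<in>X. \<forall>\<rho>'\<ge>0. (\<forall>s<S. lin n (A s) x' \<le> y s + \<rho>') \<longrightarrow> \<rho> \<le> \<rho>') \<and>
        (\<forall>x'\<in>X. (\<forall>s<S. lin n (A s) x' \<le> y s + \<rho>) \<longrightarrow> lin n c x \<le> lin n c x'))"

definition conn_graph :: "nat \<Rightarrow> (nat \<Rightarrow> nat set) \<Rightarrow> bool" where
  "conn_graph N Nb \<longleftrightarrow> (\<forall>i<N. Nb i \<subseteq> {..<N} \<and> i \<notin> Nb i) \<and>
     (\<forall>i<N. \<forall>j<N. j \<in> Nb i \<longleftrightarrow> i \<in> Nb j) \<and>
     (\<forall>i<N. \<forall>j<N. (i, j) \<in> {(i, j). i < N \<and> j \<in> Nb i}\<^sup>*)"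

text \<open>A run of the distributed algorithm with restriction vector r 1 (r scalar),
  penalty M, step-sizes alpha: y t i, z t i, v t i, mu t i, x t i.\<close>
definition alg_run :: "nat \<Rightarrow> nat \<Rightarrow> (nat \<Rightarrow> nat) \<Rightarrow> (nat \<Rightarrow> nat \<Rightarrow> real)
     \<Rightarrow> (nat \<Rightarrow> nat \<Rightarrow> nat \<Rightarrow> real) \<Rightarrow> (nat \<Rightarrow> real) \<Rightarrow> (nat \<Rightarrow> (nat \<Rightarrow> real) set)
     \<Rightarrow> (nat \<Rightarrow> nat set) \<Rightarrow> real \<Rightarrow> (nat \<Rightarrow> real) \<Rightarrow> real
     \<Rightarrow> (nat \<Rightarrow> nat \<Rightarrow> nat \<Rightarrow> real) \<Rightarrow> (nat \<Rightarrow> nat \<Rightarrow> nat \<Rightarrow> real) \<Rightarrow> (nat \<Rightarrow> nat \<Rightarrow> real)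
     \<Rightarrow> (nat \<Rightarrow> nat \<Rightarrow> nat \<Rightarrow> real) \<Rightarrow> (nat \<Rightarrow> nat \<Rightarrow> nat \<Rightarrow> real) \<Rightarrow> bool" where
  "alg_run N S n c A b X Nb r \<alpha> M y z v \<mu> x \<longleftrightarrow>
     (\<forall>s<S. (\<Sum>i<N. y 0 i s) = b s - r) \<and>
     (\<forall>t. \<forall>i<N. P1_pd_opt (n i) S (c i) (A i) M (X i) (y t i) (z t i) (v t i) (\<mu> t i)) \<and>
     (\<forall>t. \<forall>i<N. \<forall>s. y (Suc t) i s = y t i s + \<alpha> t * (\<Sum>j\<in>Nb i. \<mu> t i s - \<mu> t j s)) \<and>
     (\<forall>t. \<forall>i<N. P3_lexopt (n i) S (c i) (A i) (X i) (y t i) (x t i))"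

definition J_MILP :: "nat \<Rightarrow> nat \<Rightarrow> (nat \<Rightarrow> nat) \<Rightarrow> (nat \<Rightarrow> nat \<Rightarrow> real)
     \<Rightarrow> (nat \<Rightarrow> nat \<Rightarrow> nat \<Rightarrow> real) \<Rightarrow> (nat \<Rightarrow> real) \<Rightarrow> (nat \<Rightarrow> (nat \<Rightarrow> real) set) \<Rightarrow> real" where
  "J_MILP N S n c A b X = Inf {\<Sum>i<N. lin (n i) (c i) (xs i) | xs.
      (\<forall>i<N. xs i \<in> X i) \<and> (\<forall>s<S. (\<Sum>i<N. lin (n i) (A i s) (xs i)) \<le> b s)}"

definition LPr_opt :: "nat \<Rightarrow> nat \<Rightarrow> (nat \<Rightarrow> nat) \<Rightarrow> (nat \<Rightarrow> nat \<Rightarrow> real)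
     \<Rightarrow> (nat \<Rightarrow> nat \<Rightarrow> nat \<Rightarrow> real) \<Rightarrow> (nat \<Rightarrow> real) \<Rightarrow> (nat \<Rightarrow> (nat \<Rightarrow> real) set) \<Rightarrow> real
     \<Rightarrow> (nat \<Rightarrow> nat \<Rightarrow> real) \<Rightarrow> bool" where
  "LPr_opt N S n c A b X r zs \<longleftrightarrow>
     (let feas = (\<lambda>zs. (\<forall>i<N. zs i \<in> convh (X i)) \<and>
                       (\<forall>s<S. (\<Sum>i<N. lin (n i) (A i s) (zs i)) \<le> b s - r))
      in feas zs \<and> (\<forall>zs'. feas zs' \<longrightarrow> (\<Sum>i<N. lin (n i) (c i) (zs i)) \<le> (\<Sum>i<N. lin (n i) (c i) (zs' i))))"

definition Lmin :: "nat \<Rightarrow> (nat \<Rightarrow> real) \<Rightarrow> (nat \<Rightarrow> real) set \<Rightarrow> real" where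
  "Lmin n a X = Inf ((\<lambda>x. lin n a x) ` X)"

definition xL_opt :: "nat \<Rightarrow> nat \<Rightarrow> (nat \<Rightarrow> nat \<Rightarrow> real) \<Rightarrow> (nat \<Rightarrow> real) set
     \<Rightarrow> (nat \<Rightarrow> real) \<Rightarrow> real \<Rightarrow> bool" where
  "xL_opt n S A X xL l \<longleftrightarrow> xL \<in> X \<and> (\<forall>s<S. lin n (A s) xL - Lmin n (A s) X \<le> l) \<and>
     (\<forall>x\<in>X. \<forall>l'. (\<forall>s<S. lin n (A s) x - Lmin n (A s) X \<le> l') \<longrightarrow> l \<le> l')"

definition sigma_ASY :: "nat \<Rightarrow> nat \<Rightarrow> (nat \<Rightarrow> nat) \<Rightarrow> (nat \<Rightarrow> nat \<Rightarrow> nat \<Rightarrow> real)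
     \<Rightarrow> (nat \<Rightarrow> (nat \<Rightarrow> real) set) \<Rightarrow> (nat \<Rightarrow> nat \<Rightarrow> real) \<Rightarrow> real" where
  "sigma_ASY N S n A X xL = (real S + 1) *
     Max {lin (n i) (A i s) (xL i) - Lmin (n i) (A i s) (X i) | i s. i < N \<and> s < S}"

definition zeta :: "nat \<Rightarrow> nat \<Rightarrow> (nat \<Rightarrow> nat) \<Rightarrow> (nat \<Rightarrow> nat \<Rightarrow> nat \<Rightarrow> real) \<Rightarrow> (nat \<Rightarrow> real)
     \<Rightarrow> real \<Rightarrow> (nat \<Rightarrow> nat \<Rightarrow> real) \<Rightarrow> real" where
  "zeta N S n A b r zh = Min {b s - r - (\<Sum>i<N. lin (n i) (A i s) (zh i)) | s. s < S}"

definition Gamma_bound :: "nat \<Rightarrow> (nat \<Rightarrow> nat) \<Rightarrow> (nat \<Rightarrow> nat \<Rightarrow> real) \<Rightarrow> (nat \<Rightarrow> (nat \<Rightarrow> real) set)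
     \<Rightarrow> real \<Rightarrow> real" where
  "Gamma_bound N n c X \<zeta> = (1 / \<zeta>) *
     (\<Sum>i<N. Sup ((\<lambda>x. lin (n i) (c i) x) ` X i) - Inf ((\<lambda>x. lin (n i) (c i) x) ` X i))"

end

theory Submission
  imports Defs
begin

text \<open>
  The restricted LP has the Slater point \<open>zh\<close>, so relaxing its coupling constraints by \<open>V\<close>
  lowers its value by at most \<open>V / \<zeta>\<close> times the spread \<open>\<Sum>i (max c\<^sub>i - min c\<^sub>i)\<close>. With
  \<open>V = r\<close> (the MILP solutions are feasible for the relaxation) this bounds the LP value by
  \<open>J_MILP + \<Gamma> r\<close>; with \<open>V = \<Sum>i v\<^sub>i\<close> it shows that for \<open>M \<ge> \<Gamma>\<close> the penalized local problems
  (P1) of an allocation of \<open>b - r\<close> never beat the LP value (exact penalty).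

  The algorithm is a dual subgradient method on the allocations \<open>y\<close>: by duality for (P1), the
  multiplier \<open>\<mu>\<^sub>i\<^sup>t\<close> is a subgradient of the optimal value of (P1) in \<open>y\<^sub>i\<close>, and the update moves
  \<open>y\<close> along the graph Laplacian of \<open>\<mu>\<close>, so that \<open>y\<^sup>t = y\<^sup>0 + L W\<^sup>t\<close> with accumulated multipliers
  \<open>W\<^sup>t\<close>. For a potential \<open>w\<close> of an optimal allocation, the Laplacian energy of \<open>W\<^sup>t - w\<close> decreases
  up to the summable errors \<open>(\<alpha>\<^sup>t)\<^sup>2\<close>; this yields convergence of \<open>y\<^sup>t\<close> to an optimal allocation
  \<open>y\<^sup>*\<close>. Hence the total cost of (P1) exceeds the LP value by at most
  \<open>\<Sum>i \<mu>\<^sub>i\<^sup>t (y\<^sub>i\<^sup>* - y\<^sub>i\<^sup>t) \<le> \<Sum>i \<parallel>\<mu>\<^sub>i\<^sup>t\<parallel>\<^sub>1 \<epsilon>\<^sub>i\<close> eventually, and the theorem follows.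
\<close>

section \<open>Weighted graph Laplacians\<close>

definition wlap :: "(nat \<Rightarrow> nat \<Rightarrow> real) \<Rightarrow> nat \<Rightarrow> (nat \<Rightarrow> real) \<Rightarrow> nat \<Rightarrow> real" where
  "wlap a n w i = (\<Sum>j<n. a i j * (w i - w j))"

definition support_graph :: "(nat \<Rightarrow> nat \<Rightarrow> real) \<Rightarrow> nat \<Rightarrow> (nat \<times> nat) set" where
  "support_graph a n = {(i, j). i < n \<and> j < n \<and> i \<noteq> j \<and> a i j > 0}"

text \<open>Kron reduction: eliminating vertex \<open>n\<close> from the weighted graph on \<open>{0..n}\<close>.\<close>
definition kron_reduce :: "(nat \<Rightarrow> nat \<Rightarrow> real) \<Rightarrow> nat \<Rightarrow> nat \<Rightarrow> nat \<Rightarrow> real" where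
  "kron_reduce a n i j = a i j + a i n * a n j / (\<Sum>k<n. a n k)"

lemma kron_reduce_reach:
  fixes a :: "nat \<Rightarrow> nat \<Rightarrow> real"
  assumes nn: "\<And>i j. a i j \<ge> 0" and deg: "(\<Sum>k<n. a n k) > 0"
    and xy: "(x, y) \<in> (support_graph a (Suc n))\<^sup>*" and x: "x < n"
  shows "(y < n \<longrightarrow> (x, y) \<in> (support_graph (kron_reduce a n) n)\<^sup>*)
       \<and> (y = n \<longrightarrow> (\<exists>u<n. (x, u) \<in> (support_graph (kron_reduce a n) n)\<^sup>* \<and> a u n > 0))"
  using xy
proof (induction rule: rtrancl_induct)
  case base
  then show ?case using x by auto
next
  case (step y z)
  let ?R = "support_graph (kron_reduce a n) n"
  have yz: "y < Suc n" "z < Suc n" "y \<noteq> z" "a y z > 0"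
    using step(2) unfolding support_graph_def by auto
  have detour_nn: "a i n * a n j / (\<Sum>k<n. a n k) \<ge> 0" for i j
    using nn deg by simp
  show ?case
  proof (cases "y < n")
    case True
    then have IH: "(x, y) \<in> ?R\<^sup>*" using step(3) by auto
    show ?thesis
    proof (cases "z < n")
      case True
      have "(y, z) \<in> ?R" unfolding support_graph_def kron_reduce_def
        using yz \<open>y < n\<close> True detour_nn[of y z] by auto
      then show ?thesis using IH True by auto
    next
      case False
      then have "z = n" using yz by auto
      then show ?thesis using IH \<open>y < n\<close> yz by (intro conjI impI exI[of _ y]) auto
    qed
  next
    case False
    then have yn: "y = n" using yz by auto
    then obtain u where u: "u < n" "(x, u) \<in> ?R\<^sup>*" "a u n > 0" using step(3) by auto
    have z: "z < n" "a n z > 0" using yz yn by auto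
    show ?thesis
    proof (cases "u = z")
      case True then show ?thesis using u z by auto
    next
      case False
      have "a u n * a n z / (\<Sum>k<n. a n k) > 0" using u(3) z(2) deg by simp
      then have "(u, z) \<in> ?R" unfolding support_graph_def kron_reduce_def
        using u(1) z(1) False nn[of u z] by auto
      then show ?thesis using u z by (meson rtrancl.rtrancl_into_rtrancl)
    qed
  qed
qed

lemma kron_reduce_connected:
  fixes a :: "nat \<Rightarrow> nat \<Rightarrow> real"
  assumes "\<And>i j. a i j \<ge> 0" "(\<Sum>k<n. a n k) > 0"
    and "\<forall>i<Suc n. \<forall>j<Suc n. (i, j) \<in> (support_graph a (Suc n))\<^sup>*"
  shows "\<forall>i<n. \<forall>j<n. (i, j) \<in> (support_graph (kron_reduce a n) n)\<^sup>*"
  using kron_reduce_reach[of a n, OF assms(1,2)] assms(3) by simp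

lemma kron_reduce_nonneg:
  fixes a :: "nat \<Rightarrow> nat \<Rightarrow> real"
  assumes "\<And>i j. a i j \<ge> 0"
  shows "kron_reduce a n i j \<ge> 0"
  unfolding kron_reduce_def using assms by (simp add: sum_nonneg)

lemma wlap_kron_reduce_lift:
  fixes a :: "nat \<Rightarrow> nat \<Rightarrow> real" and n :: nat
  defines "d \<equiv> \<Sum>k<n. a n k"
  assumes deg: "d > 0"
    and w': "\<And>i. i < n \<Longrightarrow> wlap (kron_reduce a n) n w' i = e i + a i n * e n / d"
    and i: "i < Suc n"
  shows "wlap a (Suc n) (w'(n := (e n + (\<Sum>j<n. a n j * w' j)) / d)) i = e i"
proof -
  define wn where "wn = (e n + (\<Sum>j<n. a n j * w' j)) / d"
  have flow: "(\<Sum>j<n. a n j * (u - w' j)) = d * u - (\<Sum>j<n. a n j * w' j)" for u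
    by (simp add: d_def right_diff_distrib sum_subtractf sum_distrib_left mult.commute)
  have wn: "d * wn - (\<Sum>j<n. a n j * w' j) = e n" using deg by (simp add: wn_def)
  show ?thesis
  proof (cases "i = n")
    case True
    then show ?thesis using flow[of wn] wn by (simp add: wlap_def wn_def)
  next
    case False
    with i have "i < n" by simp
    have "e i + a i n * e n / d = wlap (kron_reduce a n) n w' i" using w'[OF \<open>i < n\<close>] by simp
    also have "\<dots> = (\<Sum>j<n. a i j * (w' i - w' j)) + a i n / d * (\<Sum>j<n. a n j * (w' i - w' j))"
      unfolding wlap_def kron_reduce_def d_def[symmetric]
      by (simp add: distrib_right sum.distrib sum_distrib_left mult.assoc)
    also have "\<dots> = (\<Sum>j<n. a i j * (w' i - w' j)) + a i n / d * (d * w' i - (d * wn - e n))"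
      using flow[of "w' i"] wn by simp
    also have "a i n / d * (d * w' i - (d * wn - e n)) = a i n * (w' i - wn) + a i n * e n / d"
      using deg by (simp add: field_simps)
    finally have "e i = (\<Sum>j<n. a i j * (w' i - w' j)) + a i n * (w' i - wn)"
      by simp
    then show ?thesis using \<open>i < n\<close> by (simp add: wlap_def wn_def)
  qed
qed

lemma support_graph_degree_pos:
  fixes a :: "nat \<Rightarrow> nat \<Rightarrow> real"
  assumes nn: "\<And>i j. a i j \<ge> 0" and "(n, 0) \<in> (support_graph a (Suc n))\<^sup>*" and "n \<noteq> 0"
  shows "(\<Sum>j<n. a n j) > 0"
proof -
  obtain u where "(n, u) \<in> support_graph a (Suc n)"
    using assms(2,3) by (cases rule: converse_rtranclE) auto
  then have u: "u < n" "a n u > 0" unfolding support_graph_def by auto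
  have "a n u \<le> (\<Sum>j<n. a n j)" by (rule member_le_sum) (use u nn in auto)
  then show ?thesis using u by linarith
qed

lemma kron_reduce_sym:
  fixes a :: "nat \<Rightarrow> nat \<Rightarrow> real"
  assumes "\<And>i j. a i j = a j i"
  shows "kron_reduce a n i j = kron_reduce a n j i"
  unfolding kron_reduce_def using assms by (simp add: mult.commute)

text \<open>Induction on the number of vertices, eliminating the last one by Kron reduction.\<close>
lemma wlap_solvable:
  fixes a :: "nat \<Rightarrow> nat \<Rightarrow> real"
  assumes "\<And>i j. a i j = a j i" "\<And>i j. a i j \<ge> 0"
    and "\<forall>i<n. \<forall>j<n. (i, j) \<in> (support_graph a n)\<^sup>*"
    and "(\<Sum>i<n. e i) = 0"
  shows "\<exists>w. \<forall>i<n. wlap a n w i = e i"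
  using assms
proof (induction n arbitrary: a e)
  case 0
  then show ?case by simp
next
  case (Suc n)
  note sym = Suc.prems(1) and nn = Suc.prems(2) and conn = Suc.prems(3) and esum = Suc.prems(4)
  show ?case
  proof (cases "n = 0")
    case True
    then show ?thesis using esum by (auto simp: wlap_def)
  next
    case False
    define d where "d = (\<Sum>j<n. a n j)"
    have deg: "d > 0"
      using support_graph_degree_pos[of a n, OF nn] conn False unfolding d_def by simp
    define e' where "e' i = e i + a i n * e n / d" for i
    have esum': "(\<Sum>i<n. e' i) = 0"
    proof -
      have "(\<Sum>i<n. e' i) = (\<Sum>i<n. e i) + (\<Sum>i<n. a n i) * e n / d"
        unfolding e'_def by (simp add: sum.distrib sum_divide_distrib sum_distrib_right sym)
      also have "\<dots> = (\<Sum>i<Suc n. e i)" using deg d_def by simp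
      finally show ?thesis using esum by simp
    qed
    obtain w' where "\<forall>i<n. wlap (kron_reduce a n) n w' i = e' i"
      using Suc.IH[OF kron_reduce_sym[OF sym] kron_reduce_nonneg[OF nn]
          kron_reduce_connected[OF nn _ conn] esum']
        deg d_def by blast
    then show ?thesis
      using wlap_kron_reduce_lift[of a n, folded d_def, OF deg] unfolding e'_def by blast
  qed
qed

section \<open>Affine alternatives on convex sets\<close>

text \<open>The space \<open>nat \<Rightarrow> real\<close> carries no \<open>real_vector\<close> instance, so convexity and
  affinity are stated with coordinatewise convex combinations.\<close>
definition convex_pw :: "(nat \<Rightarrow> real) set \<Rightarrow> bool" where
  "convex_pw C \<longleftrightarrow>
     (\<forall>x\<in>C. \<forall>y\<in>C. \<forall>u::real. 0 \<le> u \<and> u \<le> 1 \<longrightarrow> (\<lambda>k. (1 - u) * x k + u * y k) \<in> C)"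

definition affine_pw :: "((nat \<Rightarrow> real) \<Rightarrow> real) \<Rightarrow> bool" where
  "affine_pw f \<longleftrightarrow> (\<forall>x y u. f (\<lambda>k. (1 - u) * x k + u * y k) = (1 - u) * f x + u * f y)"

lemma affine_pw_ratio_le:
  assumes C: "convex_pw C" and f: "affine_pw f" and g: "affine_pw g"
    and pos: "\<forall>x\<in>C. f x > 0 \<or> g x > 0"
    and x: "x \<in> C" "g x < 0" and y: "y \<in> C" "f y < 0"
  shows "- g x / f x \<le> g y / - f y"
proof (rule ccontr)
  assume H: "\<not> ?thesis"
  define a b c d where "a = f x" "b = g x" "c = f y" "d = g y"
  have abcd: "a > 0" "b < 0" "c < 0" "d > 0" using pos x y by (force simp: a_b_c_d_def)+
  have H': "a * d < b * c"
  proof -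
    have "d / - c < - b / a" using H by (simp add: a_b_c_d_def)
    then show ?thesis using abcd by (simp add: field_simps)
  qed
  txt \<open>On the segment from \<open>x\<close> to \<open>y\<close>, \<open>f\<close> vanishes at \<open>z\<close>, where \<open>g\<close> would still be negative.\<close>
  define u where "u = a / (a - c)"
  have u: "0 \<le> u" "u \<le> 1" using abcd by (auto simp: u_def field_simps)
  define z where "z = (\<lambda>k. (1 - u) * x k + u * y k)"
  have zC: "z \<in> C" using C x y u unfolding convex_pw_def z_def by blast
  have "f z = (1 - u) * a + u * c" using f unfolding affine_pw_def z_def a_b_c_d_def by blast
  then have fz: "f z = 0" using abcd by (simp add: u_def field_simps)
  have gz: "g z = (1 - u) * b + u * d" using g unfolding affine_pw_def z_def a_b_c_d_def by blast
  have "1 - u = - c / (a - c)" using abcd by (simp add: u_def field_simps)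
  then have "g z = (- c * b + a * d) / (a - c)"
    using gz by (simp add: u_def add_divide_distrib diff_divide_distrib)
  moreover have "- c * b + a * d < 0" using H' by (simp add: algebra_simps)
  ultimately have "g z < 0" using abcd by (simp add: divide_neg_pos)
  then show False using pos zC fz by force
qed

text \<open>The multiplier is the supremum of the ratios bounded in \<open>affine_pw_ratio_le\<close>.\<close>
lemma affine_pw_multiplier:
  assumes C: "convex_pw C" and f: "affine_pw f" and g: "affine_pw g"
    and pos: "\<forall>x\<in>C. f x > 0 \<or> g x > 0"
    and x0: "x0 \<in> C" "g x0 < 0" and y0: "y0 \<in> C" "f y0 < 0"
  shows "\<exists>\<rho>\<ge>0. \<forall>x\<in>C. \<rho> * f x + g x \<ge> 0"
proof -
  define R where "R = {- g x / f x | x. x \<in> C \<and> g x < 0}"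
  have ub: "r \<le> g y / - f y" if "r \<in> R" "y \<in> C" "f y < 0" for r y
    using that affine_pw_ratio_le[OF C f g pos] unfolding R_def by blast
  have R: "R \<noteq> {}" using x0 unfolding R_def by blast
  have "bdd_above R" by (rule bdd_aboveI[of _ "g y0 / - f y0"]) (use ub y0 in auto)
  have ge: "- g x / f x \<le> Sup R" if "x \<in> C" "g x < 0" for x
    using that \<open>bdd_above R\<close> unfolding R_def by (auto intro!: cSup_upper)
  have le: "Sup R \<le> g y / - f y" if "y \<in> C" "f y < 0" for y
    using that ub R by (meson cSup_least)
  have "f x0 > 0" using pos x0 by force
  then have "- g x0 / f x0 > 0" using x0 by (simp add: divide_neg_pos)
  then have nn: "Sup R \<ge> 0" using ge[OF x0] by linarith
  have "Sup R * f x + g x \<ge> 0" if "x \<in> C" for x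
  proof -
    consider "g x < 0" | "f x < 0" | "g x \<ge> 0" "f x \<ge> 0" by linarith
    then show ?thesis
    proof cases
      case 1
      then have "f x > 0" using pos that by force
      then show ?thesis using ge[OF that 1] by (simp add: field_simps)
    next
      case 2
      then show ?thesis using le[OF that 2] by (simp add: field_simps)
    qed (use nn in simp)
  qed
  then show ?thesis using nn by blast
qed

lemma affine_pw_alternative:
  assumes C: "convex_pw C" and f: "affine_pw f" and g: "affine_pw g"
    and pos: "\<forall>x\<in>C. f x > 0 \<or> g x > 0"
  shows "\<exists>t. 0 \<le> t \<and> t \<le> 1 \<and> (\<forall>x\<in>C. t * f x + (1 - t) * g x \<ge> 0)"
proof (cases "(\<exists>x\<in>C. g x < 0) \<and> (\<exists>y\<in>C. f y < 0)")
  case True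
  then obtain \<rho> where \<rho>: "\<rho> \<ge> 0" "\<forall>x\<in>C. \<rho> * f x + g x \<ge> 0"
    using affine_pw_multiplier[OF C f g pos] by blast
  have "1 - \<rho> / (1 + \<rho>) = 1 / (1 + \<rho>)" using \<rho>(1) by (simp add: field_simps)
  then have "\<rho> / (1 + \<rho>) * f x + (1 - \<rho> / (1 + \<rho>)) * g x = (\<rho> * f x + g x) / (1 + \<rho>)" for x
    by (simp add: add_divide_distrib)
  then show ?thesis using \<rho> by (intro exI[of _ "\<rho> / (1 + \<rho>)"]) simp
next
  case no_mixed_signs: False
  show ?thesis
  proof (cases "\<exists>x\<in>C. g x < 0")
    case True
    then show ?thesis using no_mixed_signs by (intro exI[of _ 1]) (auto simp: not_less)
  next
    case False
    then show ?thesis by (intro exI[of _ 0]) (auto simp: not_less)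
  qed
qed

lemma affine_pw_sum:
  assumes "\<forall>k. affine_pw (f k)"
  shows "affine_pw (\<lambda>x. (\<Sum>k<m. p k * f k x) + e)"
  unfolding affine_pw_def
proof (intro allI)
  fix x y u
  have fk: "f k (\<lambda>k. (1 - u) * x k + u * y k) = (1 - u) * f k x + u * f k y" for k
    using assms unfolding affine_pw_def by blast
  have "(\<Sum>k<m. p k * f k (\<lambda>k. (1 - u) * x k + u * y k))
      = (\<Sum>k<m. (1 - u) * (p k * f k x) + u * (p k * f k y))"
    unfolding fk by (simp add: algebra_simps)
  also have "\<dots> = (1 - u) * (\<Sum>k<m. p k * f k x) + u * (\<Sum>k<m. p k * f k y)"
    by (simp add: sum.distrib sum_distrib_left)
  finally show "(\<Sum>k<m. p k * f k (\<lambda>k. (1 - u) * x k + u * y k)) + e =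
       (1 - u) * ((\<Sum>k<m. p k * f k x) + e) + u * ((\<Sum>k<m. p k * f k y) + e)"
    by (simp add: algebra_simps)
qed

lemma convex_pw_sublevel:
  assumes "convex_pw C" "affine_pw f"
  shows "convex_pw {x \<in> C. f x \<le> 0}"
  unfolding convex_pw_def
proof (intro ballI allI impI)
  fix x y and u :: real
  assume x: "x \<in> {x \<in> C. f x \<le> 0}" and y: "y \<in> {x \<in> C. f x \<le> 0}" and u: "0 \<le> u \<and> u \<le> 1"
  have "(1 - u) * f x + u * f y \<le> 0"
    using x y u by (simp add: add_nonpos_nonpos mult_nonneg_nonpos)
  then show "(\<lambda>k. (1 - u) * x k + u * y k) \<in> {x \<in> C. f x \<le> 0}"
    using assms x y u unfolding convex_pw_def affine_pw_def by auto
qed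

text \<open>An approximate form of Gordan's alternative, by induction on the family: the last member is
  split off with \<open>affine_pw_alternative\<close>.\<close>
lemma approx_gordan:
  "convex_pw C \<Longrightarrow> C \<noteq> {} \<Longrightarrow> \<forall>k. affine_pw (f k) \<Longrightarrow> \<forall>x\<in>C. \<exists>k<(m::nat). f k x > 0 \<Longrightarrow>
   \<epsilon> > 0 \<Longrightarrow>
   \<exists>p. (\<forall>k<m. p k \<ge> 0) \<and> (\<Sum>k<m. p k) = 1 \<and> (\<forall>x\<in>C. (\<Sum>k<m. p k * f k x) \<ge> - \<epsilon>)"
proof (induction m arbitrary: C \<epsilon>)
  case 0
  then show ?case by auto
next
  case (Suc m)
  note C = Suc.prems(1) and affs = Suc.prems(3) and pos = Suc.prems(4) and eps = Suc.prems(5)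
  define C' where "C' = {x \<in> C. f m x \<le> 0}"
  show ?case
  proof (cases "C' = {}")
    case True
    then have "\<forall>x\<in>C. f m x > 0" unfolding C'_def by auto
    then show ?thesis using eps by (intro exI[of _ "\<lambda>k. if k = m then 1 else 0"]) auto
  next
    case False
    have "convex_pw C'" unfolding C'_def using convex_pw_sublevel C affs by blast
    moreover have "\<forall>x\<in>C'. \<exists>k<m. f k x > 0"
      using pos unfolding C'_def by (metis (mono_tags, lifting) less_Suc_eq mem_Collect_eq not_le)
    ultimately obtain p where p: "\<forall>k<m. p k \<ge> 0" "(\<Sum>k<m. p k) = 1"
        "\<forall>x\<in>C'. (\<Sum>k<m. p k * f k x) \<ge> - (\<epsilon> / 2)"
      using Suc.IH[OF _ False affs, of "\<epsilon> / 2"] eps by auto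
    define g where "g x = (\<Sum>k<m. p k * f k x) + \<epsilon>" for x
    have "\<forall>x\<in>C. g x > 0 \<or> f m x > 0"
      using p(3) eps unfolding C'_def g_def by (fastforce simp: not_less)
    then obtain t where t: "0 \<le> t" "t \<le> 1" "\<forall>x\<in>C. t * g x + (1 - t) * f m x \<ge> 0"
      using affine_pw_alternative[OF C _ _] affine_pw_sum[OF affs] affs unfolding g_def by blast
    define p' where "p' k = (if k < m then t * p k else 1 - t)" for k
    have sum_p': "(\<Sum>k<Suc m. p' k * h k) = t * (\<Sum>k<m. p k * h k) + (1 - t) * h m" for h
      unfolding p'_def by (simp add: sum_distrib_left mult.assoc)
    show ?thesis
    proof (intro exI[of _ p'] conjI allI impI ballI)
      show "0 \<le> p' k" if "k < Suc m" for k using p(1) t that unfolding p'_def by auto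
      show "(\<Sum>k<Suc m. p' k) = 1" using sum_p'[of "\<lambda>_. 1"] p(2) by simp
      fix x assume "x \<in> C"
      then have "- t * \<epsilon> \<le> (\<Sum>k<Suc m. p' k * f k x)"
        using t(3) sum_p'[of "\<lambda>k. f k x"] unfolding g_def by (fastforce simp: algebra_simps)
      moreover have "t * \<epsilon> \<le> \<epsilon>" using t eps by (simp add: mult_le_cancel_right1)
      ultimately show "- \<epsilon> \<le> (\<Sum>k<Suc m. p' k * f k x)" by linarith
    qed
  qed
qed

section \<open>Convex hulls and linear forms\<close>

lemma sum_lessThan_add_split:
  fixes h :: "nat \<Rightarrow> real"
  shows "(\<Sum>j<K1 + K2. h j) = (\<Sum>j<K1. h j) + (\<Sum>j<K2. h (K1 + j))"
  by (induction K2) (auto simp: add.assoc)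

lemma lin_convex_comb:
  "lin n a (\<lambda>k. (1 - u) * x k + u * y k) = (1 - u) * lin n a x + u * lin n a y"
proof -
  have "(\<Sum>k<n. a k * ((1 - u) * x k + u * y k)) = (\<Sum>k<n. (1 - u) * (a k * x k) + u * (a k * y k))"
    by (intro sum.cong) (simp_all add: algebra_simps)
  then show ?thesis unfolding lin_def by (simp add: sum.distrib sum_distrib_left)
qed

lemma lin_sum_comb: "lin n a (\<lambda>k. \<Sum>j<K. w j * p j k) = (\<Sum>j<K. w j * lin n a (p j))"
  unfolding lin_def
  by (simp add: sum_distrib_left mult.assoc mult.left_commute sum.swap[of _ "{..<n}"])

lemma convex_pw_convh: "convex_pw (convh P)"
  unfolding convex_pw_def
proof (intro ballI allI impI)
  fix x y and u :: real
  assume x: "x \<in> convh P" and y: "y \<in> convh P" and u: "0 \<le> u \<and> u \<le> 1"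
  obtain K1 :: nat and p1 w1 where 1: "\<forall>j<K1. p1 j \<in> P \<and> w1 j \<ge> 0" "(\<Sum>j<K1. w1 j) = 1"
      "x = (\<lambda>k. \<Sum>j<K1. w1 j * p1 j k)"
    using x unfolding convh_def by blast
  obtain K2 :: nat and p2 w2 where 2: "\<forall>j<K2. p2 j \<in> P \<and> w2 j \<ge> 0" "(\<Sum>j<K2. w2 j) = 1"
      "y = (\<lambda>k. \<Sum>j<K2. w2 j * p2 j k)"
    using y unfolding convh_def by blast
  define p where "p j = (if j < K1 then p1 j else p2 (j - K1))" for j
  define w where "w j = (if j < K1 then (1 - u) * w1 j else u * w2 (j - K1))" for j
  have "\<forall>j<K1 + K2. p j \<in> P \<and> w j \<ge> 0" using 1 2 u unfolding p_def w_def by auto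
  moreover have "(\<Sum>j<K1 + K2. w j) = 1"
    unfolding sum_lessThan_add_split using 1(2) 2(2) by (simp add: w_def sum_distrib_left[symmetric])
  moreover have "(\<lambda>k. (1 - u) * x k + u * y k) = (\<lambda>k. \<Sum>j<K1 + K2. w j * p j k)"
    unfolding sum_lessThan_add_split 1(3) 2(3) by (simp add: w_def p_def sum_distrib_left mult.assoc)
  ultimately show "(\<lambda>k. (1 - u) * x k + u * y k) \<in> convh P" unfolding convh_def by blast
qed

lemma convh_inc: "x \<in> P \<Longrightarrow> x \<in> convh P"
  unfolding convh_def by (rule CollectI, rule exI[of _ 1], rule exI[of _ "\<lambda>_. x"]) auto

lemma lin_convh_bounds:
  assumes "z \<in> convh P" "\<And>p. p \<in> P \<Longrightarrow> lo \<le> lin n a p \<and> lin n a p \<le> hi"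
  shows "lo \<le> lin n a z \<and> lin n a z \<le> hi"
proof -
  obtain K :: nat and p w where pw: "\<forall>j<K. p j \<in> P \<and> w j \<ge> 0" "(\<Sum>j<K. w j) = 1"
      "z = (\<lambda>k. \<Sum>j<K. w j * p j k)"
    using assms(1) unfolding convh_def by blast
  have "(\<Sum>j<K. w j * lin n a (p j)) \<le> (\<Sum>j<K. w j * hi)"
    by (intro sum_mono mult_left_mono) (use pw assms(2) in auto)
  moreover have "(\<Sum>j<K. w j * lo) \<le> (\<Sum>j<K. w j * lin n a (p j))"
    by (intro sum_mono mult_left_mono) (use pw assms(2) in auto)
  ultimately show ?thesis using pw(2) unfolding pw(3) lin_sum_comb
    by (simp add: sum_distrib_right[symmetric])
qed

lemma lin_bounded:
  assumes "\<forall>x\<in>P. \<forall>k<n. \<bar>x k\<bar> \<le> B"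
  shows "bdd_above ((\<lambda>x. lin n a x) ` P)" "bdd_below ((\<lambda>x. lin n a x) ` P)"
proof -
  have b: "\<bar>lin n a x\<bar> \<le> (\<Sum>k<n. \<bar>a k\<bar> * B)" if x: "x \<in> P" for x
  proof -
    have "\<bar>lin n a x\<bar> \<le> (\<Sum>k<n. \<bar>a k * x k\<bar>)" unfolding lin_def by (rule sum_abs)
    also have "\<dots> \<le> (\<Sum>k<n. \<bar>a k\<bar> * B)"
      by (intro sum_mono) (use assms x in \<open>auto simp: abs_mult intro: mult_left_mono\<close>)
    finally show ?thesis .
  qed
  show "bdd_above ((\<lambda>x. lin n a x) ` P)"
    by (rule bdd_aboveI[of _ "\<Sum>k<n. \<bar>a k\<bar> * B"]) (use b in \<open>force simp: abs_le_iff\<close>)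
  show "bdd_below ((\<lambda>x. lin n a x) ` P)"
    by (rule bdd_belowI[of _ "- (\<Sum>k<n. \<bar>a k\<bar> * B)"]) (use b in \<open>force simp: abs_le_iff\<close>)
qed

section \<open>Duality for the local problem (P1)\<close>

lemma P1_lagr_eq:
  "P1_lagr n S c A M y z v \<mu> =
     lin n c z + (\<Sum>s<S. \<mu> s * (lin n (A s) z - y s)) + v * (M - (\<Sum>s<S. \<mu> s))"
proof -
  have "(\<Sum>s<S. \<mu> s * (lin n (A s) z - y s - v))
      = (\<Sum>s<S. \<mu> s * (lin n (A s) z - y s)) - v * (\<Sum>s<S. \<mu> s)"
    by (simp add: right_diff_distrib sum_subtractf sum_distrib_left mult.commute)
  then show ?thesis unfolding P1_lagr_def by (simp add: algebra_simps)
qed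

lemma P1_value_le_penalty:
  assumes S: "S > 0" and pd: "P1_pd_opt n S c A M X y z v \<mu>" and x: "x \<in> convh X"
  shows "lin n c z + M * v \<le> lin n c x \<or>
         (\<exists>s<S. lin n c z + M * v \<le> lin n c x + M * (lin n (A s) x - y s))"
proof -
  have opt: "lin n c z + M * v \<le> lin n c x + M * v'" if "P1_feas n S A X y x v'" for v'
    using pd that unfolding P1_pd_opt_def by blast
  obtain s0 where "s0 < S" and s0_min: "\<forall>s<S. y s0 - lin n (A s0) x \<le> y s - lin n (A s) x"
    using ex_is_arg_min_if_finite[of "{..<S}" "\<lambda>s. y s - lin n (A s) x"] S
    unfolding is_arg_min_linorder by auto
  then have s0: "s0 < S" "\<forall>s<S. lin n (A s) x - y s \<le> lin n (A s0) x - y s0"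
    by (smt (verit))+
  show ?thesis
  proof (cases "lin n (A s0) x - y s0 \<le> 0")
    case True
    then have "P1_feas n S A X y x 0" unfolding P1_feas_def using x s0 by force
    then show ?thesis using opt by fastforce
  next
    case False
    then have "P1_feas n S A X y x (lin n (A s0) x - y s0)"
      unfolding P1_feas_def using x s0 by force
    then show ?thesis using opt s0(1) by blast
  qed
qed

text \<open>Approximate strong duality for (P1), with the multipliers of the constraints scaled by the
  weights of \<open>approx_gordan\<close> applied to the \<open>S + 1\<close> affine functions of
  \<open>P1_value_le_penalty\<close>.\<close>
lemma P1_approx_dual:
  assumes S: "S > 0" and M: "M \<ge> 0" and pd: "P1_pd_opt n S c A M X y z v \<mu>" and eps: "\<epsilon> > 0"
  shows "\<exists>lam. (\<forall>s<S. lam s \<ge> 0) \<and> (\<Sum>s<S. lam s) \<le> M \<and>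
     (\<forall>x\<in>convh X. lin n c x + (\<Sum>s<S. lam s * (lin n (A s) x - y s)) \<ge> lin n c z + M * v - \<epsilon>)"
proof -
  define J where "J = lin n c z + M * v"
  define f where "f k x = (if k < S then M * (lin n (A k) x - y k) else 0) + lin n c x - J + \<epsilon> / 2"
    for k x
  have "convh X \<noteq> {}" using pd unfolding P1_pd_opt_def P1_feas_def by blast
  moreover have "\<forall>k. affine_pw (f k)"
    unfolding affine_pw_def f_def lin_convex_comb by (auto simp: field_simps)
  moreover have "\<forall>x\<in>convh X. \<exists>k<Suc S. f k x > 0"
  proof
    fix x assume "x \<in> convh X"
    from P1_value_le_penalty[OF S pd this] show "\<exists>k<Suc S. f k x > 0"
    proof (elim disjE exE conjE)
      assume "lin n c z + M * v \<le> lin n c x"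
      then have "f S x > 0" using eps unfolding f_def J_def by simp
      then show ?thesis by blast
    next
      fix s assume "s < S" "lin n c z + M * v \<le> lin n c x + M * (lin n (A s) x - y s)"
      then have "f s x > 0" using eps unfolding f_def J_def by simp
      then show ?thesis using \<open>s < S\<close> less_SucI by blast
    qed
  qed
  ultimately obtain p where p: "\<forall>k<Suc S. p k \<ge> 0" "(\<Sum>k<Suc S. p k) = 1"
      "\<forall>x\<in>convh X. (\<Sum>k<Suc S. p k * f k x) \<ge> - (\<epsilon> / 2)"
    using approx_gordan[OF convex_pw_convh, of X f "Suc S" "\<epsilon> / 2"] eps by auto
  have weighted: "(\<Sum>k<Suc S. p k * f k x)
      = (\<Sum>s<S. M * p s * (lin n (A s) x - y s)) + (lin n c x - J + \<epsilon> / 2)" for x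
  proof -
    have "(\<Sum>k<Suc S. p k * f k x) = (\<Sum>k<Suc S. p k * (if k < S then M * (lin n (A k) x - y k) else 0)
        + p k * (lin n c x - J + \<epsilon> / 2))"
      unfolding f_def by (intro sum.cong) (simp_all add: algebra_simps)
    also have "\<dots> = (\<Sum>k<Suc S. p k * (if k < S then M * (lin n (A k) x - y k) else 0))
        + (\<Sum>k<Suc S. p k) * (lin n c x - J + \<epsilon> / 2)"
      by (simp only: sum.distrib sum_distrib_right[symmetric])
    finally show ?thesis using p(2) by (simp add: mult.assoc mult.left_commute)
  qed
  have "(\<Sum>s<S. M * p s) \<le> M"
  proof -
    have "(\<Sum>s<S. p s) = 1 - p S" using p(2) by simp
    then have "(\<Sum>s<S. M * p s) = M - M * p S"
      by (simp add: sum_distrib_left[symmetric] right_diff_distrib)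
    then show ?thesis using p(1) M by simp
  qed
  then show ?thesis
    using p(1,3) M weighted unfolding J_def
    by (intro exI[of _ "\<lambda>s. M * p s"]) (fastforce simp: mult.assoc)
qed

lemma P1_value_le_lagr:
  assumes S: "S > 0" and M: "M \<ge> 0" and pd: "P1_pd_opt n S c A M X y z v \<mu>"
    and x: "x \<in> convh X" and w: "w \<ge> 0"
  shows "lin n c z + M * v \<le> P1_lagr n S c A M y x w \<mu>"
proof (rule field_le_epsilon)
  fix \<epsilon> :: real assume "\<epsilon> > 0"
  then obtain lam where lam: "\<forall>s<S. lam s \<ge> 0" "(\<Sum>s<S. lam s) \<le> M"
     "\<forall>x\<in>convh X. lin n c x + (\<Sum>s<S. lam s * (lin n (A s) x - y s)) \<ge> lin n c z + M * v - \<epsilon>"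
    using P1_approx_dual[OF S M pd] by blast
  have "ereal (lin n c z + M * v - \<epsilon>) \<le> P1_dual n S c A M X y lam"
    unfolding P1_dual_def
  proof (rule INF_greatest)
    fix zv :: "(nat \<Rightarrow> real) \<times> real" assume zv: "zv \<in> convh X \<times> {0..}"
    then have "snd zv * (M - (\<Sum>s<S. lam s)) \<ge> 0" using lam(2) by auto
    then show "ereal (lin n c z + M * v - \<epsilon>) \<le> ereal (P1_lagr n S c A M y (fst zv) (snd zv) lam)"
      using lam(3) zv unfolding P1_lagr_eq by fastforce
  qed
  also have "\<dots> \<le> P1_dual n S c A M X y \<mu>" using pd lam(1) unfolding P1_pd_opt_def by blast
  also have "\<dots> \<le> ereal (P1_lagr n S c A M y x w \<mu>)"
    unfolding P1_dual_def by (rule INF_lower2[of "(x, w)"]) (use x w in auto)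
  finally show "lin n c z + M * v \<le> P1_lagr n S c A M y x w \<mu> + \<epsilon>" by simp
qed

lemma P1_multiplier_sum_le:
  assumes S: "S > 0" and M: "M \<ge> 0" and pd: "P1_pd_opt n S c A M X y z v \<mu>"
  shows "(\<Sum>s<S. \<mu> s) \<le> M"
proof (rule ccontr)
  assume excess: "\<not> (\<Sum>s<S. \<mu> s) \<le> M"
  define d where "d = (\<Sum>s<S. \<mu> s) - M"
  define a where "a = (\<Sum>s<S. \<mu> s * (lin n (A s) z - y s)) - M * v"
  define w where "w = (\<bar>a\<bar> + 1) / d"
  have "d > 0" "w \<ge> 0" using excess by (auto simp: d_def w_def)
  have "z \<in> convh X" using pd unfolding P1_pd_opt_def P1_feas_def by blast
  from P1_value_le_lagr[OF S M pd this \<open>w \<ge> 0\<close>]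
  have "a - w * d \<ge> 0" unfolding P1_lagr_eq a_def d_def by (simp add: algebra_simps)
  moreover have "w * d = \<bar>a\<bar> + 1" using \<open>d > 0\<close> by (simp add: w_def)
  ultimately show False by linarith
qed

lemma P1_value_subgradient:
  assumes S: "S > 0" and M: "M \<ge> 0" and pd: "P1_pd_opt n S c A M X y z v \<mu>"
    and f: "P1_feas n S A X y' z' v'"
  shows "lin n c z + M * v \<le> lin n c z' + M * v' + (\<Sum>s<S. \<mu> s * (y' s - y s))"
proof -
  have z': "z' \<in> convh X" "v' \<ge> 0" "\<forall>s<S. lin n (A s) z' \<le> y' s + v'"
    using f unfolding P1_feas_def by auto
  have mu: "\<forall>s<S. \<mu> s \<ge> 0" using pd unfolding P1_pd_opt_def by blast
  have "lin n c z + M * v \<le> lin n c z' + (\<Sum>s<S. \<mu> s * (lin n (A s) z' - y s))"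
    using P1_value_le_lagr[OF S M pd z'(1), of 0] unfolding P1_lagr_eq by simp
  also have "(\<Sum>s<S. \<mu> s * (lin n (A s) z' - y s))
      = (\<Sum>s<S. \<mu> s * (lin n (A s) z' - y' s)) + (\<Sum>s<S. \<mu> s * (y' s - y s))"
    by (simp add: sum.distrib[symmetric] algebra_simps)
  also have "(\<Sum>s<S. \<mu> s * (lin n (A s) z' - y' s)) \<le> (\<Sum>s<S. \<mu> s * v')"
    using mu z'(3) by (intro sum_mono mult_left_mono) auto
  also have "(\<Sum>s<S. \<mu> s * v') \<le> M * v'"
    using P1_multiplier_sum_le[OF S M pd] z'(2) by (simp add: sum_distrib_right[symmetric] mult_right_mono)
  finally show ?thesis by simp
qed

section \<open>Convergence of the dual subgradient iteration\<close>

lemma conn_graph_nbrs: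
  assumes "conn_graph N Nb" "i < N"
  shows "Nb i \<subseteq> {..<N}" "finite (Nb i)" "card (Nb i) \<le> N"
  using assms finite_subset card_mono[of "{..<N}" "Nb i"] unfolding conn_graph_def by auto

lemma conn_graph_sym:
  assumes "conn_graph N Nb" "i < N" "j \<in> Nb i"
  shows "i \<in> Nb j"
  using assms conn_graph_nbrs(1)[OF assms(1,2)] unfolding conn_graph_def by blast

lemma conn_graph_sum_swap:
  assumes graph: "conn_graph N Nb"
  shows "(\<Sum>i<N. \<Sum>j\<in>Nb i. g i j) = (\<Sum>i<N. \<Sum>j\<in>Nb i. g j i :: real)"
proof -
  have fin: "\<forall>i\<in>{..<N}. finite (Nb i)" using conn_graph_nbrs(2)[OF graph] by blast
  have "(\<Sum>i<N. \<Sum>j\<in>Nb i. g i j) = (\<Sum>(i, j)\<in>Sigma {..<N} Nb. g i j)"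
    by (rule sum.Sigma) (use fin in auto)
  also have "\<dots> = (\<Sum>(i, j)\<in>Sigma {..<N} Nb. g j i)"
    by (rule sum.reindex_bij_witness[of _ "\<lambda>(i, j). (j, i)" "\<lambda>(i, j). (j, i)"])
       (use conn_graph_sym[OF graph] conn_graph_nbrs(1)[OF graph] in auto)
  also have "\<dots> = (\<Sum>i<N. \<Sum>j\<in>Nb i. g j i)"
    by (rule sum.Sigma[symmetric]) (use fin in auto)
  finally show ?thesis .
qed

lemma conn_graph_lap_sum_zero:
  assumes "conn_graph N Nb"
  shows "(\<Sum>i<N. \<Sum>j\<in>Nb i. f i - f j) = (0::real)"
proof -
  have "(\<Sum>i<N. \<Sum>j\<in>Nb i. f i - f j) = (\<Sum>i<N. \<Sum>j\<in>Nb i. f j - f i)"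
    by (rule conn_graph_sum_swap[OF assms])
  also have "\<dots> = - (\<Sum>i<N. \<Sum>j\<in>Nb i. f i - f j)" by (simp add: sum_negf[symmetric])
  finally show ?thesis by simp
qed

lemma bseq_family_convergent_subseq:
  fixes X :: "nat \<Rightarrow> 'a \<Rightarrow> real"
  assumes "finite I" "\<forall>p\<in>I. Bseq (\<lambda>t. X t p)"
  shows "\<exists>r. strict_mono r \<and> (\<forall>p\<in>I. convergent (\<lambda>k. X (r k) p))"
  using assms
proof (induction I rule: finite_induct)
  case empty
  then show ?case by (intro exI[of _ id]) (auto simp: strict_mono_def)
next
  case (insert p I)
  then obtain r where r: "strict_mono r" "\<forall>q\<in>I. convergent (\<lambda>k. X (r k) q)" by auto
  have B: "Bseq (\<lambda>k. X (r k) p)" using insert(4) Bseq_subseq by auto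
  obtain f where f: "strict_mono f" "monoseq (\<lambda>n. X (r (f n)) p)"
    using seq_monosub[of "\<lambda>k. X (r k) p"] by blast
  have "convergent (\<lambda>n. X (r (f n)) p)" using Bseq_monoseq_convergent[OF Bseq_subseq[OF B] f(2)] .
  moreover have "\<forall>q\<in>I. convergent (\<lambda>k. X (r (f k)) q)"
    using convergent_subseq_convergent[OF _ f(1)] r(2) by (auto simp: comp_def)
  ultimately show ?case
    using strict_mono_o[OF r(1) f(1), unfolded comp_def] by (intro exI[of _ "r \<circ> f"]) auto
qed

lemma frequently_le_imp_subseq_tendsto:
  fixes G :: "nat \<Rightarrow> real"
  assumes often: "\<And>\<eta> T. \<eta> > 0 \<Longrightarrow> \<exists>t\<ge>T. G t \<le> \<eta>" and nn: "\<And>t. G t \<ge> 0"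
  shows "\<exists>r. strict_mono r \<and> (\<lambda>k. G (r k)) \<longlonglongrightarrow> 0"
proof -
  define pick where "pick T k = (SOME t. t \<ge> T \<and> G t \<le> inverse (real (Suc k)))" for T k
  have pick: "pick T k \<ge> T \<and> G (pick T k) \<le> inverse (real (Suc k))" for T k
    unfolding pick_def by (rule someI_ex) (use often in auto)
  define r where "r = rec_nat (pick 0 0) (\<lambda>k r. pick (Suc r) (Suc k))"
  have r: "r 0 = pick 0 0" "r (Suc k) = pick (Suc (r k)) (Suc k)" for k unfolding r_def by simp_all
  have "strict_mono r" unfolding strict_mono_Suc_iff using pick r(2) by (metis Suc_le_lessD)
  moreover have "G (r k) \<le> inverse (real (Suc k))" for k
  proof (cases k)
    case 0
    then show ?thesis using pick[of 0 0] r(1) by simp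
  next
    case (Suc k')
    then show ?thesis using pick[of "Suc (r k')" "Suc k'"] r(2)[of k'] by simp
  qed
  then have "(\<lambda>k. G (r k)) \<longlonglongrightarrow> 0"
    using nn by (intro tendsto_sandwich[OF _ _ tendsto_const LIMSEQ_inverse_real_of_nat]) auto
  ultimately show ?thesis by blast
qed

text \<open>An abstract run of the dual subgradient consensus iteration: \<open>F t\<close> is the primal cost at
  time \<open>t\<close>, bounded below by \<open>K\<close>; the multipliers \<open>\<mu> t\<close> are subgradients of \<open>F\<close> with respect to
  the allocations \<open>y t\<close>; \<open>ys\<close> is an allocation with the same totals as \<open>y 0\<close> that attains \<open>K\<close>.\<close>
locale laplacian_subgradient =
  fixes N S :: nat and Nb :: "nat \<Rightarrow> nat set" and y \<mu> :: "nat \<Rightarrow> nat \<Rightarrow> nat \<Rightarrow> real"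
    and \<alpha> :: "nat \<Rightarrow> real" and F :: "nat \<Rightarrow> real" and K MB :: real and ys :: "nat \<Rightarrow> nat \<Rightarrow> real"
  assumes N_pos: "N > 0"
  and graph: "conn_graph N Nb"
  and update: "\<And>t i s. i < N \<Longrightarrow> y (Suc t) i s = y t i s + \<alpha> t * (\<Sum>j\<in>Nb i. \<mu> t i s - \<mu> t j s)"
  and mu_bounded: "\<And>t i s. i < N \<Longrightarrow> s < S \<Longrightarrow> 0 \<le> \<mu> t i s \<and> \<mu> t i s \<le> MB"
  and alpha_nonneg: "\<And>t. \<alpha> t \<ge> 0"
  and alpha_not_summable: "filterlim (\<lambda>T. \<Sum>t<T. \<alpha> t) at_top sequentially"
  and alpha_sq_summable: "summable (\<lambda>t. (\<alpha> t)\<^sup>2)"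
  and F_lower: "\<And>t. K \<le> F t"
  and F_subgradient: "\<And>t t'. F t \<le> F t' + (\<Sum>i<N. \<Sum>s<S. \<mu> t i s * (y t' i s - y t i s))"
  and ys_sum: "\<And>s. s < S \<Longrightarrow> (\<Sum>i<N. ys i s) = (\<Sum>i<N. y 0 i s)"
  and ys_optimal: "\<And>t. F t \<le> K + (\<Sum>i<N. \<Sum>s<S. \<mu> t i s * (ys i s - y t i s))"
begin

definition lap :: "(nat \<Rightarrow> nat \<Rightarrow> real) \<Rightarrow> nat \<Rightarrow> nat \<Rightarrow> real" where
  "lap U i s = (\<Sum>j\<in>Nb i. U i s - U j s)"

definition energy :: "(nat \<Rightarrow> nat \<Rightarrow> real) \<Rightarrow> real" where
  "energy U = (\<Sum>s<S. \<Sum>i<N. \<Sum>j\<in>Nb i. (U i s - U j s)\<^sup>2)"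

definition energy_form :: "(nat \<Rightarrow> nat \<Rightarrow> real) \<Rightarrow> (nat \<Rightarrow> nat \<Rightarrow> real) \<Rightarrow> real" where
  "energy_form U V = (\<Sum>s<S. \<Sum>i<N. \<Sum>j\<in>Nb i. (U i s - U j s) * (V i s - V j s))"

definition acc :: "nat \<Rightarrow> nat \<Rightarrow> nat \<Rightarrow> real" where
  "acc t i s = (\<Sum>\<tau><t. \<alpha> \<tau> * \<mu> \<tau> i s)"

definition opt_potential :: "(nat \<Rightarrow> nat \<Rightarrow> real) \<Rightarrow> bool" where
  "opt_potential w \<longleftrightarrow>
     (\<forall>t. F t \<le> K + (\<Sum>i<N. \<Sum>s<S. \<mu> t i s * (y 0 i s + lap w i s - y t i s)))"

definition energy_step_bound :: real where
  "energy_step_bound = real S * real N * real N * MB\<^sup>2"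

lemma y_eq_acc: "i < N \<Longrightarrow> y t i s = y 0 i s + lap (acc t) i s"
proof (induction t)
  case 0
  then show ?case by (simp add: lap_def acc_def)
next
  case (Suc t)
  have "lap (acc (Suc t)) i s = lap (acc t) i s + \<alpha> t * (\<Sum>j\<in>Nb i. \<mu> t i s - \<mu> t j s)"
    unfolding lap_def acc_def by (simp add: sum.distrib[symmetric] sum_distrib_left algebra_simps)
  then show ?case using Suc update by simp
qed

lemma lap_diff: "lap (\<lambda>i s. U i s - V i s) i s = lap U i s - lap V i s"
  unfolding lap_def sum_subtractf[symmetric] by (intro sum.cong) auto

lemma energy_form_eq_lap: "energy_form U V = 2 * (\<Sum>s<S. \<Sum>i<N. lap U i s * V i s)"
proof -
  have swap: "(\<Sum>i<N. \<Sum>j\<in>Nb i. (U i s - U j s) * V j s)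
      = - (\<Sum>i<N. \<Sum>j\<in>Nb i. (U i s - U j s) * V i s)" for s
    using conn_graph_sum_swap[OF graph, of "\<lambda>i j. (U i s - U j s) * V j s"]
    by (simp add: sum_negf[symmetric] algebra_simps)
  have "energy_form U V = (\<Sum>s<S. (\<Sum>i<N. \<Sum>j\<in>Nb i. (U i s - U j s) * V i s)
      - (\<Sum>i<N. \<Sum>j\<in>Nb i. (U i s - U j s) * V j s))"
    unfolding energy_form_def by (simp add: right_diff_distrib sum_subtractf)
  then show ?thesis unfolding swap lap_def by (simp add: sum_distrib_left sum_distrib_right)
qed

lemma energy_add:
  "energy (\<lambda>i s. U i s + a * V i s) = energy U + 2 * a * energy_form U V + a\<^sup>2 * energy V"
proof -
  have "energy (\<lambda>i s. U i s + a * V i s) = (\<Sum>s<S. \<Sum>i<N. \<Sum>j\<in>Nb i. (U i s - U j s)\<^sup>2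
      + 2 * a * ((U i s - U j s) * (V i s - V j s)) + a\<^sup>2 * (V i s - V j s)\<^sup>2)"
    unfolding energy_def by (intro sum.cong refl) (simp add: power2_eq_square algebra_simps)
  then show ?thesis
    unfolding energy_def energy_form_def by (simp add: sum.distrib sum_distrib_left)
qed

lemma energy_nonneg: "energy U \<ge> 0"
  unfolding energy_def by (intro sum_nonneg) auto

lemma energy_shift: "energy (\<lambda>i s. U i s - c s) = energy U"
  unfolding energy_def by simp

lemma edge_diff_le_sqrt_energy:
  assumes "i < N" "j \<in> Nb i" "s < S"
  shows "\<bar>U i s - U j s\<bar> \<le> sqrt (energy U)"
proof -
  have fin: "finite (Nb i)" using conn_graph_nbrs(2)[OF graph assms(1)] .
  have "(U i s - U j s)\<^sup>2 \<le> (\<Sum>j\<in>Nb i. (U i s - U j s)\<^sup>2)"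
    by (rule member_le_sum) (use assms fin in auto)
  also have "\<dots> \<le> (\<Sum>i<N. \<Sum>j\<in>Nb i. (U i s - U j s)\<^sup>2)"
    by (rule member_le_sum[of i _ "\<lambda>i. \<Sum>j\<in>Nb i. (U i s - U j s)\<^sup>2"])
       (use assms in \<open>auto intro!: sum_nonneg\<close>)
  also have "\<dots> \<le> energy U" unfolding energy_def
    by (rule member_le_sum[of s _ "\<lambda>s. \<Sum>i<N. \<Sum>j\<in>Nb i. (U i s - U j s)\<^sup>2"])
       (use assms in \<open>auto intro!: sum_nonneg\<close>)
  finally show ?thesis by (metis real_sqrt_abs real_sqrt_le_mono)
qed

lemma path_diff_le_sqrt_energy:
  assumes "(a, b) \<in> {(i, j). i < N \<and> j \<in> Nb i}\<^sup>*"
  shows "\<exists>C. \<forall>U s. s < S \<longrightarrow> \<bar>U b s - U a s\<bar> \<le> C * sqrt (energy U)"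
  using assms
proof (induction rule: rtrancl_induct)
  case base
  then show ?case by (intro exI[of _ 0]) auto
next
  case (step b c)
  then obtain C where C: "\<forall>U s. s < S \<longrightarrow> \<bar>U b s - U a s\<bar> \<le> C * sqrt (energy U)" by blast
  have "\<bar>U c s - U a s\<bar> \<le> (C + 1) * sqrt (energy U)" if "s < S" for U s
  proof -
    have "\<bar>U b s - U c s\<bar> \<le> sqrt (energy U)"
      using edge_diff_le_sqrt_energy step(2) that by auto
    moreover have "\<bar>U b s - U a s\<bar> \<le> C * sqrt (energy U)" using C that by blast
    ultimately show ?thesis by (simp add: algebra_simps)
  qed
  then show ?case by blast
qed

lemma energy_mu_le: "energy (\<mu> t) \<le> energy_step_bound"
proof -
  have "energy (\<mu> t) \<le> (\<Sum>s<S. \<Sum>i<N. \<Sum>j\<in>Nb i. MB\<^sup>2)"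
    unfolding energy_def
  proof (intro sum_mono)
    fix s i j assume "s \<in> {..<S}" "i \<in> {..<N}" "j \<in> Nb i"
    moreover from this have "j < N" using conn_graph_nbrs(1)[OF graph] by auto
    ultimately have "0 \<le> \<mu> t i s \<and> \<mu> t i s \<le> MB" "0 \<le> \<mu> t j s \<and> \<mu> t j s \<le> MB"
      using mu_bounded by auto
    then have "\<bar>\<mu> t i s - \<mu> t j s\<bar> \<le> MB" by (simp add: abs_le_iff)
    then show "(\<mu> t i s - \<mu> t j s)\<^sup>2 \<le> MB\<^sup>2" by (metis abs_ge_zero power2_abs power_mono)
  qed
  also have "\<dots> \<le> (\<Sum>s<S. \<Sum>i<N. real N * MB\<^sup>2)"
    by (intro sum_mono) (use conn_graph_nbrs(3)[OF graph] in \<open>auto intro!: mult_right_mono\<close>)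
  finally show ?thesis by (simp add: energy_step_bound_def)
qed

lemma energy_step_bound_nonneg: "energy_step_bound \<ge> 0"
  unfolding energy_step_bound_def by simp

text \<open>The standard subgradient estimate, in the potentials: the distance of the accumulated
  multipliers to an optimal potential decreases up to a square-summable error.\<close>
lemma energy_step:
  assumes "opt_potential w"
  shows "energy (\<lambda>i s. acc (Suc t) i s - w i s)
    \<le> energy (\<lambda>i s. acc t i s - w i s) - 4 * \<alpha> t * (F t - K) + (\<alpha> t)\<^sup>2 * energy_step_bound"
proof -
  define U where "U = (\<lambda>i s. acc t i s - w i s)"
  have eq: "(\<lambda>i s. acc (Suc t) i s - w i s) = (\<lambda>i s. U i s + \<alpha> t * \<mu> t i s)"
    unfolding U_def acc_def by (simp add: algebra_simps)
  have "lap U i s = y t i s - (y 0 i s + lap w i s)" if "i < N" for i s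
    using y_eq_acc[OF that, of t s] unfolding U_def lap_diff by simp
  then have "energy_form U (\<mu> t)
      = 2 * (\<Sum>s<S. \<Sum>i<N. (y t i s - (y 0 i s + lap w i s)) * \<mu> t i s)"
    unfolding energy_form_eq_lap by simp
  also have "(\<Sum>s<S. \<Sum>i<N. (y t i s - (y 0 i s + lap w i s)) * \<mu> t i s)
      = - (\<Sum>i<N. \<Sum>s<S. \<mu> t i s * (y 0 i s + lap w i s - y t i s))"
    by (subst sum.swap) (simp add: sum_negf[symmetric] algebra_simps)
  finally have "energy_form U (\<mu> t)
      = - 2 * (\<Sum>i<N. \<Sum>s<S. \<mu> t i s * (y 0 i s + lap w i s - y t i s))" by simp
  moreover have "F t \<le> K + (\<Sum>i<N. \<Sum>s<S. \<mu> t i s * (y 0 i s + lap w i s - y t i s))"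
    using assms unfolding opt_potential_def by blast
  ultimately have "energy_form U (\<mu> t) \<le> - 2 * (F t - K)" by (smt (verit))
  then have "2 * \<alpha> t * energy_form U (\<mu> t) \<le> 2 * \<alpha> t * (- 2 * (F t - K))"
    using alpha_nonneg by (intro mult_left_mono) auto
  moreover have "(\<alpha> t)\<^sup>2 * energy (\<mu> t) \<le> (\<alpha> t)\<^sup>2 * energy_step_bound"
    using energy_mu_le by (intro mult_left_mono) auto
  ultimately show ?thesis unfolding eq energy_add U_def by (simp add: algebra_simps)
qed

text \<open>\<open>ys - y 0\<close> has zero column sums, so it lies in the range of the graph Laplacian.\<close>
lemma exists_opt_potential: "\<exists>w. opt_potential w"
proof -
  define a where "a i j = (if i < N \<and> j < N \<and> j \<in> Nb i then 1 else 0 :: real)" for i j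
  have "support_graph a N = {(i, j). i < N \<and> j \<in> Nb i}"
    using conn_graph_nbrs(1)[OF graph] graph
    unfolding support_graph_def a_def conn_graph_def by auto
  then have conn: "\<forall>i<N. \<forall>j<N. (i, j) \<in> (support_graph a N)\<^sup>*"
    using graph unfolding conn_graph_def by simp
  have sym: "a i j = a j i" for i j unfolding a_def using graph unfolding conn_graph_def by auto
  have wlap_a: "wlap a N v i = (\<Sum>j\<in>Nb i. v i - v j)" if "i < N" for i v
  proof -
    have "wlap a N v i = (\<Sum>j\<in>{..<N} \<inter> Nb i. v i - v j)"
      unfolding wlap_def a_def sum.inter_restrict[OF finite_lessThan] using that
      by (intro sum.cong) auto
    also have "{..<N} \<inter> Nb i = Nb i" using conn_graph_nbrs(1)[OF graph that] by blast
    finally show ?thesis .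
  qed
  have "\<exists>v. \<forall>i<N. wlap a N v i = ys i s - y 0 i s" if "s < S" for s
    using wlap_solvable[OF sym _ conn, of "\<lambda>i. ys i s - y 0 i s"] ys_sum[OF that]
    by (simp add: a_def sum_subtractf)
  then obtain v where v: "\<And>s i. s < S \<Longrightarrow> i < N \<Longrightarrow> wlap a N (v s) i = ys i s - y 0 i s"
    by metis
  have "ys i s = y 0 i s + lap (\<lambda>i s. v s i) i s" if "i < N" "s < S" for i s
    using v[OF that(2,1)] wlap_a[OF that(1)] unfolding lap_def by simp
  then have "(\<Sum>i<N. \<Sum>s<S. \<mu> t i s * (ys i s - y t i s))
      = (\<Sum>i<N. \<Sum>s<S. \<mu> t i s * (y 0 i s + lap (\<lambda>i s. v s i) i s - y t i s))" for t
    by (intro sum.cong refl) simp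
  then have "opt_potential (\<lambda>i s. v s i)"
    unfolding opt_potential_def using ys_optimal by simp
  then show ?thesis by blast
qed

lemma energy_telescope:
  assumes "opt_potential w"
  shows "energy (\<lambda>i s. acc t i s - w i s) + 4 * (\<Sum>\<tau><t. \<alpha> \<tau> * (F \<tau> - K))
    \<le> energy (\<lambda>i s. acc 0 i s - w i s) + energy_step_bound * (\<Sum>\<tau>. (\<alpha> \<tau>)\<^sup>2)"
proof -
  have "energy (\<lambda>i s. acc t i s - w i s) + 4 * (\<Sum>\<tau><t. \<alpha> \<tau> * (F \<tau> - K))
    \<le> energy (\<lambda>i s. acc 0 i s - w i s) + energy_step_bound * (\<Sum>\<tau><t. (\<alpha> \<tau>)\<^sup>2)"
  proof (induction t)
    case (Suc t)
    have "(\<Sum>\<tau><Suc t. \<alpha> \<tau> * (F \<tau> - K)) = (\<Sum>\<tau><t. \<alpha> \<tau> * (F \<tau> - K)) + \<alpha> t * (F t - K)"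
      "(\<Sum>\<tau><Suc t. (\<alpha> \<tau>)\<^sup>2) = (\<Sum>\<tau><t. (\<alpha> \<tau>)\<^sup>2) + (\<alpha> t)\<^sup>2"
      by simp_all
    then show ?case using Suc.IH energy_step[OF assms, of t] by (simp add: algebra_simps)
  qed simp
  moreover have "(\<Sum>\<tau><t. (\<alpha> \<tau>)\<^sup>2) \<le> (\<Sum>\<tau>. (\<alpha> \<tau>)\<^sup>2)"
    by (rule sum_le_suminf[OF alpha_sq_summable]) auto
  then have "energy_step_bound * (\<Sum>\<tau><t. (\<alpha> \<tau>)\<^sup>2) \<le> energy_step_bound * (\<Sum>\<tau>. (\<alpha> \<tau>)\<^sup>2)"
    by (rule mult_left_mono[OF _ energy_step_bound_nonneg])
  ultimately show ?thesis by linarith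
qed

lemma energy_acc_le:
  assumes "opt_potential w"
  shows "energy (\<lambda>i s. acc t i s - w i s)
    \<le> energy (\<lambda>i s. acc 0 i s - w i s) + energy_step_bound * (\<Sum>\<tau>. (\<alpha> \<tau>)\<^sup>2)"
proof -
  have "0 \<le> (\<Sum>\<tau><t. \<alpha> \<tau> * (F \<tau> - K))"
    using alpha_nonneg F_lower by (intro sum_nonneg) simp
  then show ?thesis using energy_telescope[OF assms, of t] by linarith
qed

lemma weighted_gap_sum_le:
  assumes "opt_potential w"
  shows "4 * (\<Sum>\<tau><t. \<alpha> \<tau> * (F \<tau> - K))
    \<le> energy (\<lambda>i s. acc 0 i s - w i s) + energy_step_bound * (\<Sum>\<tau>. (\<alpha> \<tau>)\<^sup>2)"
proof -
  have "0 \<le> energy (\<lambda>i s. acc t i s - w i s)" by (rule energy_nonneg)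
  then show ?thesis using energy_telescope[OF assms, of t] by linarith
qed

text \<open>Since \<open>\<Sum> \<alpha> t = \<infinity>\<close> while \<open>\<Sum> \<alpha> t * (F t - K)\<close> stays bounded, \<open>F\<close> comes arbitrarily
  close to \<open>K\<close> infinitely often.\<close>
lemma frequently_near_opt:
  assumes "\<eta> > 0"
  shows "\<exists>t\<ge>T. F t - K \<le> \<eta>"
proof (rule ccontr)
  assume "\<not> ?thesis"
  then have far: "\<eta> < F t - K" if "t \<ge> T" for t using that by force
  obtain w where w: "opt_potential w" using exists_opt_potential by blast
  define C where "C = energy (\<lambda>i s. acc 0 i s - w i s) + energy_step_bound * (\<Sum>\<tau>. (\<alpha> \<tau>)\<^sup>2)"
  have bounded: "(\<Sum>\<tau><t. \<alpha> \<tau> * (F \<tau> - K)) \<le> C / 4" for t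
    using weighted_gap_sum_le[OF w, of t] unfolding C_def by simp
  have "(\<Sum>\<tau><T + d. \<alpha> \<tau>) \<le> C / (4 * \<eta>) + (\<Sum>\<tau><T. \<alpha> \<tau>)" for d
  proof -
    have "\<eta> * (\<Sum>\<tau><d. \<alpha> (T + \<tau>)) \<le> (\<Sum>\<tau><d. \<alpha> (T + \<tau>) * (F (T + \<tau>) - K))"
      unfolding sum_distrib_left
    proof (rule sum_mono)
      fix \<tau>
      have "\<eta> \<le> F (T + \<tau>) - K" using far[of "T + \<tau>"] by simp
      then show "\<eta> * \<alpha> (T + \<tau>) \<le> \<alpha> (T + \<tau>) * (F (T + \<tau>) - K)"
        using mult_right_mono[OF _ alpha_nonneg, of \<eta> "F (T + \<tau>) - K" "T + \<tau>"]
        by (simp add: mult.commute)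
    qed
    also have "\<dots> \<le> (\<Sum>\<tau><T. \<alpha> \<tau> * (F \<tau> - K)) + (\<Sum>\<tau><d. \<alpha> (T + \<tau>) * (F (T + \<tau>) - K))"
      using F_lower alpha_nonneg by (simp add: sum_nonneg)
    also have "\<dots> \<le> C / 4" using bounded[of "T + d"] by (simp add: sum_lessThan_add_split)
    finally show ?thesis using assms by (simp add: sum_lessThan_add_split field_simps)
  qed
  moreover obtain t0 where "\<And>t. t \<ge> t0 \<Longrightarrow> C / (4 * \<eta>) + (\<Sum>\<tau><T. \<alpha> \<tau>) + 1 \<le> (\<Sum>\<tau><t. \<alpha> \<tau>)"
    using alpha_not_summable unfolding filterlim_at_top eventually_sequentially by blast
  ultimately show False by (smt (verit) le_add2)
qed

lemma acc_relative_bounded: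
  assumes "i < N" "s < S"
  shows "Bseq (\<lambda>t. acc t i s - acc t 0 s)"
proof -
  obtain w where w: "opt_potential w" using exists_opt_potential by blast
  define C where "C = energy (\<lambda>i s. acc 0 i s - w i s) + energy_step_bound * (\<Sum>\<tau>. (\<alpha> \<tau>)\<^sup>2)"
  have "(0, i) \<in> {(i, j). i < N \<and> j \<in> Nb i}\<^sup>*"
    using graph N_pos assms(1) unfolding conn_graph_def by blast
  then obtain Ci where Ci: "\<forall>U s. s < S \<longrightarrow> \<bar>U i s - U 0 s\<bar> \<le> Ci * sqrt (energy U)"
    using path_diff_le_sqrt_energy by blast
  have "\<bar>acc t i s - acc t 0 s\<bar> \<le> \<bar>Ci\<bar> * sqrt C + \<bar>w i s - w 0 s\<bar>" for t
  proof -
    have "energy (\<lambda>i s. acc t i s - w i s) \<le> C"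
      using energy_acc_le[OF w, of t] unfolding C_def .
    then have "sqrt (energy (\<lambda>i s. acc t i s - w i s)) \<le> sqrt C" by (rule real_sqrt_le_mono)
    then have "Ci * sqrt (energy (\<lambda>i s. acc t i s - w i s)) \<le> \<bar>Ci\<bar> * sqrt C"
      by (intro mult_mono) (auto simp: energy_nonneg)
    moreover have "\<bar>(acc t i s - w i s) - (acc t 0 s - w 0 s)\<bar>
        \<le> Ci * sqrt (energy (\<lambda>i s. acc t i s - w i s))"
      using spec[OF spec[OF Ci, of "\<lambda>i s. acc t i s - w i s"], of s] assms(2) by simp
    ultimately have "\<bar>(acc t i s - w i s) - (acc t 0 s - w 0 s)\<bar> \<le> \<bar>Ci\<bar> * sqrt C" by linarith
    then show ?thesis by linarith
  qed
  then show ?thesis by (intro BseqI'[where K = "\<bar>Ci\<bar> * sqrt C + \<bar>w i s - w 0 s\<bar>"]) simp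
qed

lemma exists_limit_point:
  "\<exists>r wl. strict_mono r \<and> (\<lambda>k. F (r k)) \<longlonglongrightarrow> K \<and>
     (\<forall>i<N. \<forall>s<S. (\<lambda>k. acc (r k) i s - acc (r k) 0 s) \<longlonglongrightarrow> wl i s)"
proof -
  obtain r1 where r1: "strict_mono r1" "(\<lambda>k. F (r1 k) - K) \<longlonglongrightarrow> 0"
    using frequently_le_imp_subseq_tendsto[of "\<lambda>t. F t - K"] frequently_near_opt F_lower by auto
  have bseq: "Bseq (\<lambda>k. acc (r1 k) (fst p) (snd p) - acc (r1 k) 0 (snd p))"
    if "p \<in> {..<N} \<times> {..<S}" for p
  proof -
    have "fst p < N" "snd p < S" using that by auto
    from Bseq_subseq[OF acc_relative_bounded[OF this], of r1] show ?thesis .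
  qed
  obtain r2 where r2: "strict_mono r2"
    "\<forall>p\<in>{..<N} \<times> {..<S}. convergent (\<lambda>k. acc (r1 (r2 k)) (fst p) (snd p) - acc (r1 (r2 k)) 0 (snd p))"
    using bseq_family_convergent_subseq[of "{..<N} \<times> {..<S}"
        "\<lambda>k p. acc (r1 k) (fst p) (snd p) - acc (r1 k) 0 (snd p)"] bseq by blast
  have "(\<lambda>k. F (r1 (r2 k))) \<longlonglongrightarrow> K"
    using LIMSEQ_subseq_LIMSEQ[OF r1(2) r2(1)] by (simp add: comp_def LIM_zero_iff)
  moreover have "\<forall>i<N. \<forall>s<S. (\<lambda>k. acc (r1 (r2 k)) i s - acc (r1 (r2 k)) 0 s)
      \<longlonglongrightarrow> lim (\<lambda>k. acc (r1 (r2 k)) i s - acc (r1 (r2 k)) 0 s)"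
    using r2(2) by (auto simp: convergent_LIMSEQ_iff)
  ultimately show ?thesis
    using strict_mono_o[OF r1(1) r2(1)]
    by (intro exI[of _ "r1 \<circ> r2"]
        exI[of _ "\<lambda>i s. lim (\<lambda>k. acc (r1 (r2 k)) i s - acc (r1 (r2 k)) 0 s)"]) (simp add: comp_def)
qed

lemma limit_point_opt_potential:
  assumes r: "strict_mono r" and F_r: "(\<lambda>k. F (r k)) \<longlonglongrightarrow> K"
    and y_r: "\<And>i s. i < N \<Longrightarrow> s < S \<Longrightarrow> (\<lambda>k. y (r k) i s) \<longlonglongrightarrow> y 0 i s + lap w i s"
  shows "opt_potential w"
  unfolding opt_potential_def
proof
  fix t
  show "F t \<le> K + (\<Sum>i<N. \<Sum>s<S. \<mu> t i s * (y 0 i s + lap w i s - y t i s))"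
  proof (rule tendsto_le[OF trivial_limit_sequentially])
    show "(\<lambda>k. F (r k) + (\<Sum>i<N. \<Sum>s<S. \<mu> t i s * (y (r k) i s - y t i s))) \<longlonglongrightarrow>
          K + (\<Sum>i<N. \<Sum>s<S. \<mu> t i s * (y 0 i s + lap w i s - y t i s))"
      by (intro tendsto_add F_r tendsto_sum tendsto_mult tendsto_const tendsto_diff y_r) auto
    show "(\<lambda>k. F t) \<longlonglongrightarrow> F t" by simp
    show "\<forall>\<^sub>F k in sequentially. F t \<le> F (r k) + (\<Sum>i<N. \<Sum>s<S. \<mu> t i s * (y (r k) i s - y t i s))"
      using F_subgradient by simp
  qed
qed

text \<open>Quasi-Fejer monotonicity: the energy distance to an optimal potential can only grow by the
  summable amounts \<open>\<alpha>\<^sup>2\<close>, so its convergence to 0 along a subsequence forces convergence.\<close>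
lemma energy_tendsto_zero:
  assumes w: "opt_potential w" and r: "strict_mono r"
    and sub: "(\<lambda>k. energy (\<lambda>i s. acc (r k) i s - w i s)) \<longlonglongrightarrow> 0"
  shows "(\<lambda>t. energy (\<lambda>i s. acc t i s - w i s)) \<longlonglongrightarrow> 0"
proof -
  define \<Psi> where "\<Psi> t = energy (\<lambda>i s. acc t i s - w i s)" for t
  define B where "B = energy_step_bound"
  have tail: "\<Psi> t \<le> \<Psi> t0 + B * (\<Sum>\<tau>\<in>{t0..<t}. (\<alpha> \<tau>)\<^sup>2)" if "t0 \<le> t" for t0 t
    using that
  proof (induction t rule: dec_induct)
    case (step t)
    have "\<Psi> (Suc t) \<le> \<Psi> t - 4 * \<alpha> t * (F t - K) + (\<alpha> t)\<^sup>2 * B"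
      using energy_step[OF w, of t] unfolding \<Psi>_def B_def .
    moreover have "0 \<le> 4 * \<alpha> t * (F t - K)" using alpha_nonneg[of t] F_lower[of t] by simp
    moreover have "(\<Sum>\<tau>\<in>{t0..<Suc t}. (\<alpha> \<tau>)\<^sup>2) = (\<Sum>\<tau>\<in>{t0..<t}. (\<alpha> \<tau>)\<^sup>2) + (\<alpha> t)\<^sup>2"
      using step(1) by simp
    ultimately show ?case using step(3) by (simp add: algebra_simps)
  qed simp
  show ?thesis
    unfolding \<Psi>_def[symmetric]
  proof (rule LIMSEQ_I)
    fix \<eta> :: real assume "\<eta> > 0"
    define e where "e = \<eta> / (2 * (B + 1))"
    have "e > 0" using \<open>\<eta> > 0\<close> energy_step_bound_nonneg by (simp add: e_def B_def)
    then obtain T1 where T1: "\<And>m n. m \<ge> T1 \<Longrightarrow> norm (\<Sum>\<tau>\<in>{m..<n}. (\<alpha> \<tau>)\<^sup>2) < e"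
      using alpha_sq_summable unfolding summable_Cauchy by blast
    obtain k0 where k0: "\<And>k. k \<ge> k0 \<Longrightarrow> \<bar>\<Psi> (r k)\<bar> < \<eta> / 2"
      using LIMSEQ_D[OF sub[folded \<Psi>_def], of "\<eta> / 2"] \<open>\<eta> > 0\<close> by auto
    define t0 where "t0 = r (max k0 T1)"
    have "T1 \<le> t0" using seq_suble[OF r, of "max k0 T1"] unfolding t0_def by simp
    have "\<Psi> t < \<eta>" if "t \<ge> t0" for t
    proof -
      have "(\<Sum>\<tau>\<in>{t0..<t}. (\<alpha> \<tau>)\<^sup>2) \<le> e" using T1[OF \<open>T1 \<le> t0\<close>, of t] by simp
      then have "B * (\<Sum>\<tau>\<in>{t0..<t}. (\<alpha> \<tau>)\<^sup>2) \<le> B * e"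
        using energy_step_bound_nonneg unfolding B_def by (simp add: mult_left_mono)
      also have "B * e < \<eta> / 2"
        using \<open>\<eta> > 0\<close> energy_step_bound_nonneg by (simp add: e_def B_def field_simps)
      finally show ?thesis
        using tail[OF that] k0[of "max k0 T1"] abs_ge_self[of "\<Psi> t0"] unfolding t0_def by linarith
    qed
    then show "\<exists>no. \<forall>t\<ge>no. norm (\<Psi> t - 0) < \<eta>"
      using energy_nonneg unfolding \<Psi>_def by (metis abs_of_nonneg diff_zero real_norm_def)
  qed
qed

lemma y_dist_le_energy:
  assumes "i < N" "s < S"
  shows "\<bar>y t i s - (y 0 i s + lap w i s)\<bar> \<le> real N * sqrt (energy (\<lambda>i s. acc t i s - w i s))"
proof -
  have "y t i s - (y 0 i s + lap w i s) = lap (\<lambda>i s. acc t i s - w i s) i s"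
    using y_eq_acc[OF assms(1), of t s] unfolding lap_diff by simp
  then have "\<bar>y t i s - (y 0 i s + lap w i s)\<bar>
      \<le> (\<Sum>j\<in>Nb i. \<bar>(acc t i s - w i s) - (acc t j s - w j s)\<bar>)"
    unfolding lap_def by (simp add: sum_abs)
  also have "\<dots> \<le> (\<Sum>j\<in>Nb i. sqrt (energy (\<lambda>i s. acc t i s - w i s)))"
  proof (rule sum_mono)
    fix j assume "j \<in> Nb i"
    from edge_diff_le_sqrt_energy[OF assms(1) this assms(2), of "\<lambda>i s. acc t i s - w i s"]
    show "\<bar>(acc t i s - w i s) - (acc t j s - w j s)\<bar> \<le> sqrt (energy (\<lambda>i s. acc t i s - w i s))"
      by simp
  qed
  also have "\<dots> \<le> real N * sqrt (energy (\<lambda>i s. acc t i s - w i s))"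
    using conn_graph_nbrs(3)[OF graph assms(1)] by (simp add: mult_right_mono energy_nonneg)
  finally show ?thesis .
qed

lemma relative_limit_energy_tendsto_zero:
  assumes wl: "\<And>i s. i < N \<Longrightarrow> s < S \<Longrightarrow> (\<lambda>k. acc (r k) i s - acc (r k) 0 s) \<longlonglongrightarrow> wl i s"
  shows "(\<lambda>k. energy (\<lambda>i s. acc (r k) i s - wl i s)) \<longlonglongrightarrow> 0"
proof -
  define wn where "wn k i s = acc (r k) i s - acc (r k) 0 s" for k i s
  have wn: "(\<lambda>k. wn k i s) \<longlonglongrightarrow> wl i s" if "i < N" "s < S" for i s
    using wl[OF that] unfolding wn_def .
  have "(\<lambda>k. energy (\<lambda>i s. wn k i s - wl i s)) \<longlonglongrightarrow> (\<Sum>s<S. \<Sum>i<N. \<Sum>j\<in>Nb i. (0::real))"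
    unfolding energy_def
  proof (intro tendsto_sum)
    fix s i j assume "s \<in> {..<S}" "i \<in> {..<N}" "j \<in> Nb i"
    moreover from this have "j < N" using conn_graph_nbrs(1)[OF graph] by auto
    ultimately have "(\<lambda>k. (wn k i s - wl i s - (wn k j s - wl j s))\<^sup>2)
        \<longlonglongrightarrow> (wl i s - wl i s - (wl j s - wl j s))\<^sup>2"
      by (intro tendsto_power tendsto_diff tendsto_const wn) auto
    then show "(\<lambda>k. (wn k i s - wl i s - (wn k j s - wl j s))\<^sup>2) \<longlonglongrightarrow> 0" by simp
  qed
  moreover have "energy (\<lambda>i s. wn k i s - wl i s) = energy (\<lambda>i s. acc (r k) i s - wl i s)" for k
    using energy_shift[of "\<lambda>i s. acc (r k) i s - wl i s" "\<lambda>s. acc (r k) 0 s"]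
    by (simp add: wn_def algebra_simps)
  ultimately show ?thesis by simp
qed

lemma y_tendsto_if_energy_tendsto_zero:
  assumes E: "(\<lambda>t. energy (\<lambda>i s. acc t i s - w i s)) \<longlonglongrightarrow> 0" and "i < N" "s < S"
  shows "(\<lambda>t. y t i s) \<longlonglongrightarrow> y 0 i s + lap w i s"
proof (rule LIM_zero_cancel, rule Lim_null_comparison)
  show "\<forall>\<^sub>F t in sequentially. norm (y t i s - (y 0 i s + lap w i s))
      \<le> real N * sqrt (energy (\<lambda>i s. acc t i s - w i s))"
    using y_dist_le_energy[OF assms(2,3)] by simp
  show "(\<lambda>t. real N * sqrt (energy (\<lambda>i s. acc t i s - w i s))) \<longlonglongrightarrow> 0"
    using tendsto_mult[OF tendsto_const tendsto_real_sqrt[OF E], of "real N"] by simp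
qed

theorem iterates_converge:
  "\<exists>yl. (\<forall>t. F t \<le> K + (\<Sum>i<N. \<Sum>s<S. \<mu> t i s * (yl i s - y t i s))) \<and>
        (\<forall>i<N. \<forall>s<S. (\<lambda>t. y t i s) \<longlonglongrightarrow> yl i s)"
proof -
  obtain r wl where r: "strict_mono r" "(\<lambda>k. F (r k)) \<longlonglongrightarrow> K"
    and wl: "\<And>i s. i < N \<Longrightarrow> s < S \<Longrightarrow> (\<lambda>k. acc (r k) i s - acc (r k) 0 s) \<longlonglongrightarrow> wl i s"
    using exists_limit_point by blast
  have "(\<lambda>k. y (r k) i s) \<longlonglongrightarrow> y 0 i s + lap wl i s" if "i < N" "s < S" for i s
  proof -
    have "y (r k) i s = y 0 i s + lap (\<lambda>i s. acc (r k) i s - acc (r k) 0 s) i s" for k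
      using y_eq_acc[OF that(1), of "r k" s] unfolding lap_def by simp
    moreover have "(\<lambda>k. y 0 i s + lap (\<lambda>i s. acc (r k) i s - acc (r k) 0 s) i s)
        \<longlonglongrightarrow> y 0 i s + lap wl i s"
      unfolding lap_def using conn_graph_nbrs(1)[OF graph that(1)] that
      by (intro tendsto_intros wl) auto
    ultimately show ?thesis by simp
  qed
  with r have opt: "opt_potential wl" by (rule limit_point_opt_potential)
  have "(\<lambda>t. energy (\<lambda>i s. acc t i s - wl i s)) \<longlonglongrightarrow> 0"
    using energy_tendsto_zero[OF opt r(1) relative_limit_energy_tendsto_zero[OF wl]] .
  define yl where "yl i s = y 0 i s + lap wl i s" for i s
  have "\<forall>i<N. \<forall>s<S. (\<lambda>t. y t i s) \<longlonglongrightarrow> yl i s"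
    using y_tendsto_if_energy_tendsto_zero[OF \<open>_ \<longlonglongrightarrow> 0\<close>] unfolding yl_def by blast
  moreover have "\<forall>t. F t \<le> K + (\<Sum>i<N. \<Sum>s<S. \<mu> t i s * (yl i s - y t i s))"
    using opt unfolding opt_potential_def yl_def .
  ultimately show ?thesis by (intro exI[of _ yl] conjI)
qed

end

section \<open>The restricted LP and runs of the algorithm\<close>

lemma alg_run_sum_y:
  assumes "conn_graph N Nb" and "alg_run N S n c A b X Nb r \<alpha> M y z v \<mu> x" and "s < S"
  shows "(\<Sum>i<N. y t i s) = b s - r"
proof (induction t)
  case 0
  then show ?case using assms(2,3) unfolding alg_run_def by simp
next
  case (Suc t)
  have "(\<Sum>i<N. y (Suc t) i s) = (\<Sum>i<N. y t i s) + \<alpha> t * (\<Sum>i<N. \<Sum>j\<in>Nb i. \<mu> t i s - \<mu> t j s)"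
    using assms(2) unfolding alg_run_def by (simp add: sum.distrib sum_distrib_left)
  then show ?case using Suc conn_graph_lap_sum_zero[OF assms(1)] by simp
qed

lemma alg_run_multiplier_bounds:
  assumes "S > 0" "M \<ge> 0" and run: "alg_run N S n c A b X Nb r \<alpha> M y z v \<mu> x"
    and "i < N" "s < S"
  shows "0 \<le> \<mu> t i s \<and> \<mu> t i s \<le> M"
proof -
  have pd: "P1_pd_opt (n i) S (c i) (A i) M (X i) (y t i) (z t i) (v t i) (\<mu> t i)"
    using run \<open>i < N\<close> unfolding alg_run_def by blast
  then have nn: "\<forall>s<S. 0 \<le> \<mu> t i s" unfolding P1_pd_opt_def by blast
  then have "\<mu> t i s \<le> (\<Sum>s<S. \<mu> t i s)" by (intro member_le_sum) (use \<open>s < S\<close> in auto)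
  also have "\<dots> \<le> M" by (rule P1_multiplier_sum_le[OF assms(1,2) pd])
  finally show ?thesis using nn \<open>s < S\<close> by blast
qed

lemma alg_run_value_subgradient:
  assumes "S > 0" "M \<ge> 0" and run: "alg_run N S n c A b X Nb r \<alpha> M y z v \<mu> x"
    and feas: "\<And>i. i < N \<Longrightarrow> P1_feas (n i) S (A i) (X i) (y' i) (z' i) (v' i)"
  shows "(\<Sum>i<N. lin (n i) (c i) (z t i) + M * v t i)
    \<le> (\<Sum>i<N. lin (n i) (c i) (z' i) + M * v' i) + (\<Sum>i<N. \<Sum>s<S. \<mu> t i s * (y' i s - y t i s))"
proof -
  have "(\<Sum>i<N. lin (n i) (c i) (z t i) + M * v t i)
      \<le> (\<Sum>i<N. lin (n i) (c i) (z' i) + M * v' i + (\<Sum>s<S. \<mu> t i s * (y' i s - y t i s)))"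
    using run feas unfolding alg_run_def by (intro sum_mono P1_value_subgradient[OF assms(1,2)]) auto
  then show ?thesis by (simp add: sum.distrib)
qed

locale restricted_lp =
  fixes N S :: nat and n :: "nat \<Rightarrow> nat"
    and c :: "nat \<Rightarrow> nat \<Rightarrow> real" and A :: "nat \<Rightarrow> nat \<Rightarrow> nat \<Rightarrow> real" and b :: "nat \<Rightarrow> real"
    and X :: "nat \<Rightarrow> (nat \<Rightarrow> real) set" and r :: real and zh :: "nat \<Rightarrow> nat \<Rightarrow> real"
    and zs :: "nat \<Rightarrow> nat \<Rightarrow> real"
  assumes N_pos: "N > 0" and S_pos: "S > 0"
    and X_bounded: "\<And>i. i < N \<Longrightarrow> \<exists>B. \<forall>x\<in>X i. \<forall>k<n i. \<bar>x k\<bar> \<le> B"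
    and MILP_feasible: "\<exists>xs. (\<forall>i<N. xs i \<in> X i) \<and> (\<forall>s<S. (\<Sum>i<N. lin (n i) (A i s) (xs i)) \<le> b s)"
    and r_nonneg: "r \<ge> 0"
    and zs: "LPr_opt N S n c A b X r zs"
    and zh: "\<And>i. i < N \<Longrightarrow> zh i \<in> convh (X i)"
    and zeta_pos: "zeta N S n A b r zh > 0"
begin

abbreviation "\<zeta> \<equiv> zeta N S n A b r zh"

definition cost_spread :: real where
  "cost_spread = (\<Sum>i<N. Sup ((\<lambda>x. lin (n i) (c i) x) ` X i) - Inf ((\<lambda>x. lin (n i) (c i) x) ` X i))"

definition lp_value :: real where
  "lp_value = (\<Sum>i<N. lin (n i) (c i) (zs i))"

lemma lp_sol_feasible:
  "\<forall>i<N. zs i \<in> convh (X i)" "\<forall>s<S. (\<Sum>i<N. lin (n i) (A i s) (zs i)) \<le> b s - r"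
  using zs unfolding LPr_opt_def Let_def by auto

lemma lp_value_le:
  "\<forall>i<N. zz i \<in> convh (X i) \<Longrightarrow> \<forall>s<S. (\<Sum>i<N. lin (n i) (A i s) (zz i)) \<le> b s - r
   \<Longrightarrow> lp_value \<le> (\<Sum>i<N. lin (n i) (c i) (zz i))"
  using zs unfolding LPr_opt_def Let_def lp_value_def by blast

lemma cost_bounds:
  assumes "i < N" "z \<in> convh (X i)"
  shows "Inf ((\<lambda>x. lin (n i) (c i) x) ` X i) \<le> lin (n i) (c i) z
       \<and> lin (n i) (c i) z \<le> Sup ((\<lambda>x. lin (n i) (c i) x) ` X i)"
proof (rule lin_convh_bounds[OF assms(2)])
  fix p assume "p \<in> X i"
  moreover obtain B where "\<forall>x\<in>X i. \<forall>k<n i. \<bar>x k\<bar> \<le> B" using X_bounded[OF assms(1)] by blast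
  ultimately show "Inf ((\<lambda>x. lin (n i) (c i) x) ` X i) \<le> lin (n i) (c i) p
       \<and> lin (n i) (c i) p \<le> Sup ((\<lambda>x. lin (n i) (c i) x) ` X i)"
    using lin_bounded by (auto intro: cInf_lower cSup_upper)
qed

lemma cost_diff_le_spread:
  assumes "\<forall>i<N. zz i \<in> convh (X i)" "\<forall>i<N. zz' i \<in> convh (X i)"
  shows "(\<Sum>i<N. lin (n i) (c i) (zz i)) - (\<Sum>i<N. lin (n i) (c i) (zz' i)) \<le> cost_spread"
  unfolding cost_spread_def sum_subtractf[symmetric]
proof (rule sum_mono)
  fix i assume "i \<in> {..<N}"
  then have "i < N" by simp
  then show "lin (n i) (c i) (zz i) - lin (n i) (c i) (zz' i)
      \<le> Sup ((\<lambda>x. lin (n i) (c i) x) ` X i) - Inf ((\<lambda>x. lin (n i) (c i) x) ` X i)"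
    using cost_bounds[OF \<open>i < N\<close>, of "zz i"] cost_bounds[OF \<open>i < N\<close>, of "zz' i"] assms by auto
qed

lemma cost_spread_nonneg: "cost_spread \<ge> 0"
  using cost_diff_le_spread[of zh zh] zh by simp

text \<open>Relaxing the coupling constraints by \<open>V\<close> lowers the value of the restricted LP by at most
  \<open>V / \<zeta>\<close> times the cost spread: mix a relaxed solution with the Slater point \<open>zh\<close>.\<close>
lemma lp_value_le_relaxed:
  assumes zz: "\<forall>i<N. zz i \<in> convh (X i)" and V: "V \<ge> 0"
    and cons: "\<forall>s<S. (\<Sum>i<N. lin (n i) (A i s) (zz i)) \<le> b s - r + V"
  shows "lp_value \<le> (\<Sum>i<N. lin (n i) (c i) (zz i)) + V / \<zeta> * cost_spread"
proof -
  define u where "u = V / (V + \<zeta>)"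
  have u: "0 \<le> u" "u \<le> 1" "u \<le> V / \<zeta>" "(1 - u) * V - u * \<zeta> = 0"
    using V zeta_pos by (auto simp: u_def field_simps)
  define w where "w i = (\<lambda>k. (1 - u) * zz i k + u * zh i k)" for i
  have "\<forall>i<N. w i \<in> convh (X i)"
    using convex_pw_convh zz zh u unfolding convex_pw_def w_def by blast
  moreover have "\<forall>s<S. (\<Sum>i<N. lin (n i) (A i s) (w i)) \<le> b s - r"
  proof (intro allI impI)
    fix s assume "s < S"
    have "\<zeta> \<le> b s - r - (\<Sum>i<N. lin (n i) (A i s) (zh i))"
      unfolding zeta_def by (rule Min_le) (use \<open>s < S\<close> in auto)
    then have "(\<Sum>i<N. lin (n i) (A i s) (w i))
        \<le> (1 - u) * (b s - r + V) + u * (b s - r - \<zeta>)"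
      unfolding w_def lin_convex_comb sum.distrib sum_distrib_left[symmetric]
      using cons \<open>s < S\<close> u by (intro add_mono mult_left_mono) auto
    then show "(\<Sum>i<N. lin (n i) (A i s) (w i)) \<le> b s - r" using u(4) by (simp add: algebra_simps)
  qed
  ultimately have "lp_value \<le> (\<Sum>i<N. lin (n i) (c i) (w i))" by (rule lp_value_le)
  also have "\<dots> = (\<Sum>i<N. lin (n i) (c i) (zz i)
      + u * (lin (n i) (c i) (zh i) - lin (n i) (c i) (zz i)))"
    unfolding w_def lin_convex_comb by (intro sum.cong) (simp_all add: algebra_simps)
  also have "\<dots> = (\<Sum>i<N. lin (n i) (c i) (zz i))
      + u * ((\<Sum>i<N. lin (n i) (c i) (zh i)) - (\<Sum>i<N. lin (n i) (c i) (zz i)))"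
    by (simp add: sum.distrib sum_distrib_left[symmetric] sum_subtractf)
  also have "u * ((\<Sum>i<N. lin (n i) (c i) (zh i)) - (\<Sum>i<N. lin (n i) (c i) (zz i)))
      \<le> u * cost_spread"
    using cost_diff_le_spread[of zh zz] zh zz u(1) by (intro mult_left_mono) auto
  also have "\<dots> \<le> V / \<zeta> * cost_spread" using u(3) cost_spread_nonneg by (rule mult_right_mono)
  finally show ?thesis by simp
qed

lemma lp_value_le_J_MILP: "lp_value \<le> J_MILP N S n c A b X + r / \<zeta> * cost_spread"
proof -
  have "lp_value - r / \<zeta> * cost_spread \<le> J_MILP N S n c A b X"
    unfolding J_MILP_def
  proof (rule cInf_greatest)
    show "{\<Sum>i<N. lin (n i) (c i) (xs i) |xs. (\<forall>i<N. xs i \<in> X i)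
        \<and> (\<forall>s<S. (\<Sum>i<N. lin (n i) (A i s) (xs i)) \<le> b s)} \<noteq> {}"
      using MILP_feasible by blast
  next
    fix q assume "q \<in> {\<Sum>i<N. lin (n i) (c i) (xs i) |xs. (\<forall>i<N. xs i \<in> X i)
        \<and> (\<forall>s<S. (\<Sum>i<N. lin (n i) (A i s) (xs i)) \<le> b s)}"
    then obtain xs where "q = (\<Sum>i<N. lin (n i) (c i) (xs i))" "\<forall>i<N. xs i \<in> X i"
      "\<forall>s<S. (\<Sum>i<N. lin (n i) (A i s) (xs i)) \<le> b s" by blast
    then show "lp_value - r / \<zeta> * cost_spread \<le> q"
      using lp_value_le_relaxed[of xs r] convh_inc r_nonneg by auto
  qed
  then show ?thesis by simp
qed

lemma lp_value_le_penalized: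
  assumes M: "M \<ge> cost_spread / \<zeta>"
    and y'_sum: "\<forall>s<S. (\<Sum>i<N. y' i s) = b s - r"
    and feas: "\<forall>i<N. P1_feas (n i) S (A i) (X i) (y' i) (z' i) (v' i)"
  shows "lp_value \<le> (\<Sum>i<N. lin (n i) (c i) (z' i) + M * v' i)"
proof -
  define V where "V = (\<Sum>i<N. v' i)"
  have V: "V \<ge> 0" unfolding V_def using feas unfolding P1_feas_def by (intro sum_nonneg) auto
  have "(\<Sum>i<N. lin (n i) (A i s) (z' i)) \<le> b s - r + V" if "s < S" for s
  proof -
    have "(\<Sum>i<N. lin (n i) (A i s) (z' i)) \<le> (\<Sum>i<N. y' i s + v' i)"
      using feas that by (intro sum_mono) (auto simp: P1_feas_def)
    then show ?thesis using y'_sum that unfolding V_def by (simp add: sum.distrib)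
  qed
  then have "lp_value \<le> (\<Sum>i<N. lin (n i) (c i) (z' i)) + V / \<zeta> * cost_spread"
    using feas V by (intro lp_value_le_relaxed) (auto simp: P1_feas_def)
  also have "V / \<zeta> * cost_spread = cost_spread / \<zeta> * V" by simp
  also have "\<dots> \<le> M * V" using M V by (rule mult_right_mono)
  finally show ?thesis unfolding V_def by (simp add: sum.distrib sum_distrib_left)
qed

text \<open>The reference allocation of the convergence argument: each agent keeps the resources its
  component of \<open>zs\<close> uses, plus an equal share of the remaining slack.\<close>
definition lp_share :: "nat \<Rightarrow> nat \<Rightarrow> real" where
  "lp_share i s = lin (n i) (A i s) (zs i) + (b s - r - (\<Sum>j<N. lin (n j) (A j s) (zs j))) / real N"

lemma lp_share_sum: "(\<Sum>i<N. lp_share i s) = b s - r"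
  using N_pos unfolding lp_share_def by (simp add: sum.distrib)

lemma lp_share_feasible:
  assumes "i < N"
  shows "P1_feas (n i) S (A i) (X i) (lp_share i) (zs i) 0"
  using lp_sol_feasible assms N_pos unfolding P1_feas_def lp_share_def by simp

lemma alg_run_converges:
  assumes graph: "conn_graph N Nb" and run: "alg_run N S n c A b X Nb r \<alpha> M y z v \<mu> x"
    and \<alpha>: "\<And>t. \<alpha> t \<ge> 0" "filterlim (\<lambda>T. \<Sum>t<T. \<alpha> t) at_top sequentially"
      "summable (\<lambda>t. (\<alpha> t)\<^sup>2)"
    and M: "M \<ge> cost_spread / \<zeta>"
  shows "\<exists>yl. (\<forall>t. (\<Sum>i<N. lin (n i) (c i) (z t i) + M * v t i)
                  \<le> lp_value + (\<Sum>i<N. \<Sum>s<S. \<mu> t i s * (yl i s - y t i s)))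
           \<and> (\<forall>i<N. \<forall>s<S. (\<lambda>t. y t i s) \<longlonglongrightarrow> yl i s)"
proof -
  have "M \<ge> 0" using M cost_spread_nonneg zeta_pos by (smt (verit) divide_nonneg_pos)
  have feas: "P1_feas (n i) S (A i) (X i) (y t i) (z t i) (v t i)" if "i < N" for t i
    using run that unfolding alg_run_def P1_pd_opt_def by blast
  interpret laplacian_subgradient N S Nb y \<mu> \<alpha> "\<lambda>t. \<Sum>i<N. lin (n i) (c i) (z t i) + M * v t i"
    lp_value M lp_share
  proof
    show "y (Suc t) i s = y t i s + \<alpha> t * (\<Sum>j\<in>Nb i. \<mu> t i s - \<mu> t j s)" if "i < N" for t i s
      using run that unfolding alg_run_def by blast
    show "0 \<le> \<mu> t i s \<and> \<mu> t i s \<le> M" if "i < N" "s < S" for t i s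
      using alg_run_multiplier_bounds[OF S_pos \<open>M \<ge> 0\<close> run that] .
    show "lp_value \<le> (\<Sum>i<N. lin (n i) (c i) (z t i) + M * v t i)" for t
      using lp_value_le_penalized[OF M] alg_run_sum_y[OF graph run] feas by blast
    show "(\<Sum>i<N. lin (n i) (c i) (z t i) + M * v t i) \<le> (\<Sum>i<N. lin (n i) (c i) (z t' i) + M * v t' i)
        + (\<Sum>i<N. \<Sum>s<S. \<mu> t i s * (y t' i s - y t i s))" for t t'
      using alg_run_value_subgradient[OF S_pos \<open>M \<ge> 0\<close> run feas] .
    show "(\<Sum>i<N. lp_share i s) = (\<Sum>i<N. y 0 i s)" if "s < S" for s
      using lp_share_sum alg_run_sum_y[OF graph run that] by simp
    show "(\<Sum>i<N. lin (n i) (c i) (z t i) + M * v t i)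
        \<le> lp_value + (\<Sum>i<N. \<Sum>s<S. \<mu> t i s * (lp_share i s - y t i s))" for t
      using alg_run_value_subgradient[OF S_pos \<open>M \<ge> 0\<close> run lp_share_feasible]
      unfolding lp_value_def by (simp add: sum.distrib)
  qed (use N_pos graph \<alpha> in auto)
  show ?thesis using iterates_converge .
qed

lemma alg_run_eventually_le:
  assumes graph: "conn_graph N Nb" and run: "alg_run N S n c A b X Nb r \<alpha> M y z v \<mu> x"
    and \<alpha>: "\<And>t. \<alpha> t \<ge> 0" "filterlim (\<lambda>T. \<Sum>t<T. \<alpha> t) at_top sequentially"
      "summable (\<lambda>t. (\<alpha> t)\<^sup>2)"
    and M: "M \<ge> cost_spread / \<zeta>" and \<epsilon>: "\<forall>i<N. \<epsilon> i > 0"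
  shows "\<exists>T>0. \<forall>t\<ge>T. (\<Sum>i<N. lin (n i) (c i) (z t i) + M * v t i)
                     \<le> lp_value + (\<Sum>i<N. (\<Sum>s<S. \<bar>\<mu> t i s\<bar>) * \<epsilon> i)"
proof -
  obtain yl where yl: "\<And>t. (\<Sum>i<N. lin (n i) (c i) (z t i) + M * v t i)
                  \<le> lp_value + (\<Sum>i<N. \<Sum>s<S. \<mu> t i s * (yl i s - y t i s))"
      "\<And>i s. i < N \<Longrightarrow> s < S \<Longrightarrow> (\<lambda>t. y t i s) \<longlonglongrightarrow> yl i s"
    using alg_run_converges[OF graph run \<alpha> M] by blast
  have "\<forall>\<^sub>F t in sequentially. \<forall>p\<in>{..<N} \<times> {..<S}. \<bar>yl (fst p) (snd p) - y t (fst p) (snd p)\<bar> < \<epsilon> (fst p)"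
  proof (intro eventually_ball_finite ballI)
    fix p assume "p \<in> {..<N} \<times> {..<S}"
    then have "(\<lambda>t. y t (fst p) (snd p)) \<longlonglongrightarrow> yl (fst p) (snd p)" "\<epsilon> (fst p) > 0"
      using yl(2) \<epsilon> by auto
    from tendstoD[OF this]
    show "\<forall>\<^sub>F t in sequentially. \<bar>yl (fst p) (snd p) - y t (fst p) (snd p)\<bar> < \<epsilon> (fst p)"
      by (simp add: dist_real_def abs_minus_commute)
  qed simp
  then obtain T where T: "\<And>t i s. t \<ge> T \<Longrightarrow> i < N \<Longrightarrow> s < S \<Longrightarrow> \<bar>yl i s - y t i s\<bar> < \<epsilon> i"
    unfolding eventually_sequentially by force
  have gap: "(\<Sum>i<N. \<Sum>s<S. \<mu> t i s * (yl i s - y t i s)) \<le> (\<Sum>i<N. (\<Sum>s<S. \<bar>\<mu> t i s\<bar>) * \<epsilon> i)"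
    if "t \<ge> T" for t
    unfolding sum_distrib_right
  proof (intro sum_mono)
    fix i s assume "i \<in> {..<N}" "s \<in> {..<S}"
    then have "\<bar>\<mu> t i s\<bar> * \<bar>yl i s - y t i s\<bar> \<le> \<bar>\<mu> t i s\<bar> * \<epsilon> i"
      using T[OF that] by (simp add: mult_left_mono less_imp_le)
    then show "\<mu> t i s * (yl i s - y t i s) \<le> \<bar>\<mu> t i s\<bar> * \<epsilon> i"
      by (metis abs_ge_self abs_mult order.trans)
  qed
  show ?thesis
  proof (intro exI[of _ "Suc T"] conjI allI impI)
    fix t assume "Suc T \<le> t"
    then show "(\<Sum>i<N. lin (n i) (c i) (z t i) + M * v t i)
        \<le> lp_value + (\<Sum>i<N. (\<Sum>s<S. \<bar>\<mu> t i s\<bar>) * \<epsilon> i)"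
      using order.trans[OF yl(1) add_left_mono[OF gap]] by simp
  qed simp
qed

lemma alg_run_suboptimality:
  assumes graph: "conn_graph N Nb" and run: "alg_run N S n c A b X Nb r \<alpha> M y z v \<mu> x"
    and \<alpha>: "\<And>t. \<alpha> t \<ge> 0" "filterlim (\<lambda>T. \<Sum>t<T. \<alpha> t) at_top sequentially"
      "summable (\<lambda>t. (\<alpha> t)\<^sup>2)"
    and M: "M \<ge> cost_spread / \<zeta>" and \<epsilon>: "\<forall>i<N. \<epsilon> i > 0"
  shows "\<exists>T>0. \<forall>t\<ge>T. (\<Sum>i<N. lin (n i) (c i) (x t i)) - J_MILP N S n c A b X
    \<le> (\<Sum>i<N. lin (n i) (c i) (x t i) - (lin (n i) (c i) (z t i) + M * v t i))
      + (\<Sum>i<N. (\<Sum>s<S. \<bar>\<mu> t i s\<bar>) * \<epsilon> i) + r / \<zeta> * cost_spread"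
proof -
  obtain T where "T > 0" and T: "\<And>t. t \<ge> T \<Longrightarrow> (\<Sum>i<N. lin (n i) (c i) (z t i) + M * v t i)
      \<le> lp_value + (\<Sum>i<N. (\<Sum>s<S. \<bar>\<mu> t i s\<bar>) * \<epsilon> i)"
    using alg_run_eventually_le[OF graph run \<alpha> M \<epsilon>] by blast
  then show ?thesis
    using lp_value_le_J_MILP unfolding sum_subtractf by (intro exI[of _ T]) force
qed

end

lemma sigma_ASY_nonneg:
  assumes "N > 0" "S > 0" and xL: "xL_opt (n 0) S (A 0) (X 0) (xL 0) l"
    and bounded: "\<exists>B. \<forall>x\<in>X 0. \<forall>k<n 0. \<bar>x k\<bar> \<le> B"
  shows "sigma_ASY N S n A X xL \<ge> 0"
proof -
  define g where "g i s = lin (n i) (A i s) (xL i) - Lmin (n i) (A i s) (X i)" for i s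
  have "xL 0 \<in> X 0" using xL unfolding xL_opt_def by blast
  then have "0 \<le> g 0 0"
    using bounded lin_bounded(2) unfolding g_def Lmin_def by (auto intro: cInf_lower)
  also have "g 0 0 \<le> Max ((\<lambda>(i, s). g i s) ` ({..<N} \<times> {..<S}))"
    using assms(1,2) by (intro Max_ge) auto
  also have "(\<lambda>(i, s). g i s) ` ({..<N} \<times> {..<S})
      = {lin (n i) (A i s) (xL i) - Lmin (n i) (A i s) (X i) | i s. i < N \<and> s < S}"
    unfolding g_def by auto
  finally show ?thesis unfolding sigma_ASY_def by simp
qed

theorem theorem4:
  fixes N S :: nat and n Zc m :: "nat \<Rightarrow> nat"
    and D :: "nat \<Rightarrow> nat \<Rightarrow> nat \<Rightarrow> real" and d :: "nat \<Rightarrow> nat \<Rightarrow> real"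
    and c :: "nat \<Rightarrow> nat \<Rightarrow> real" and A :: "nat \<Rightarrow> nat \<Rightarrow> nat \<Rightarrow> real" and b :: "nat \<Rightarrow> real"
    and X :: "nat \<Rightarrow> (nat \<Rightarrow> real) set"
    and Nb :: "nat \<Rightarrow> nat set" and \<delta> :: real and \<alpha> :: "nat \<Rightarrow> real"
    and xL :: "nat \<Rightarrow> nat \<Rightarrow> real" and lt :: "nat \<Rightarrow> real" and zh :: "nat \<Rightarrow> nat \<Rightarrow> real"
  assumes N_pos: "N > 0" and S_pos: "S > 0"
    and X_def: "\<And>i. X i = Xset (n i) (Zc i) (D i) (d i) (m i)"
    and Zc_le: "\<And>i. i < N \<Longrightarrow> Zc i \<le> n i"
    and X_nonempty: "\<And>i. i < N \<Longrightarrow> X i \<noteq> {}"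
    and X_bounded: "\<And>i. i < N \<Longrightarrow> \<exists>B. \<forall>x\<in>X i. \<forall>k<n i. \<bar>x k\<bar> \<le> B"
    and MILP_feasible: "\<exists>xs. (\<forall>i<N. xs i \<in> X i) \<and>
                          (\<forall>s<S. (\<Sum>i<N. lin (n i) (A i s) (xs i)) \<le> b s)"
    and graph: "conn_graph N Nb"
    and xL: "\<And>i. i < N \<Longrightarrow> xL_opt (n i) S (A i) (X i) (xL i) (lt i)"
    and delta_pos: "\<delta> > 0"
    and assmA: "\<exists>zs. LPr_opt N S n c A b X (sigma_ASY N S n A X xL + \<delta>) zs \<and>
                 (\<forall>zs'. LPr_opt N S n c A b X (sigma_ASY N S n A X xL + \<delta>) zs'
                        \<longrightarrow> (\<forall>i<N. zs' i = zs i))"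
    and assmB: "\<And>t. \<alpha> t \<ge> 0" "filterlim (\<lambda>T. \<Sum>t<T. \<alpha> t) at_top sequentially"
               "summable (\<lambda>t. (\<alpha> t)\<^sup>2)"
    and assmC: "\<And>i. i < N \<Longrightarrow> zh i \<in> convh (X i)"
               "zeta N S n A b (sigma_ASY N S n A X xL + \<delta>) zh > 0"
  shows "\<exists>M0. \<forall>M>M0. \<forall>\<epsilon> :: nat \<Rightarrow> real. (\<forall>i<N. \<epsilon> i > 0) \<longrightarrow>
     (\<forall>y z v \<mu> x. alg_run N S n c A b X Nb (sigma_ASY N S n A X xL + \<delta>) \<alpha> M y z v \<mu> x \<longrightarrow>
        (\<exists>T>0. \<forall>t\<ge>T.
          (\<Sum>i<N. lin (n i) (c i) (x t i)) - J_MILP N S n c A b X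
            \<le> (\<Sum>i<N. lin (n i) (c i) (x t i) - (lin (n i) (c i) (z t i) + M * v t i))
              + (\<Sum>i<N. (\<Sum>s<S. \<bar>\<mu> t i s\<bar>) * \<epsilon> i)
              + Gamma_bound N n c X (zeta N S n A b (sigma_ASY N S n A X xL + \<delta>) zh)
                  * (sigma_ASY N S n A X xL + \<delta>)))"
proof -
  define r where "r = sigma_ASY N S n A X xL + \<delta>"
  have "r \<ge> 0"
    using sigma_ASY_nonneg[of N S n A X xL, OF N_pos S_pos xL[OF N_pos] X_bounded[OF N_pos]] delta_pos
    unfolding r_def by simp
  obtain zs where "LPr_opt N S n c A b X r zs" using assmA unfolding r_def by blast
  then interpret restricted_lp N S n c A b X r zh zs
    using N_pos S_pos X_bounded MILP_feasible \<open>r \<ge> 0\<close> assmC unfolding r_def by unfold_locales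
  have Gamma: "Gamma_bound N n c X \<zeta> * r = r / \<zeta> * cost_spread"
    unfolding Gamma_bound_def cost_spread_def by simp
  show ?thesis unfolding r_def[symmetric] Gamma
    by (intro exI[of _ "cost_spread / \<zeta>"] allI impI alg_run_suboptimality[OF graph _ assmB])
      simp_all
qed

end
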